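(* Let $\mathcal{C}$ be a permutation class containing only finitely many simple permutations, and let $k$ be the length of the longest simple permutations in $\mathcal{C}$. Then every basis element of the substitution closure $\langle\mathcal{C}\rangle$ has length at most $k+2$.
   Context: A permutation $\pi$ contains $\sigma$ ($\sigma\le\pi$) if some subsequence of $\pi$ has the same relative order as $\sigma$. A permutation class is a downset under $\le$; its basis is the set of $\le$-minimal permutations not in the class. An interval of a permutation is a set of contiguous positions whose values form a contiguous set; a permutation of length $n$ is simple if its only intervals have sizes $0,1,n$. The inflation $\sigma[\alpha_1,\dots,\alpha_m]$ (for $\sigma$ of length $m$ and nonempty $\alpha_i$) replaces each entry $\sigma(i)$ by an interval order isomorphic to $\alpha_i$, arranged relative to one another as in $\sigma$. A class is substitution-closed if it contains $\sigma[\alpha_1,\dots,\alpha_m]$ whenever it contains $\sigma,\alpha_1,\dots,\alpha_m$; the substitution closure $\langle\mathcal{C}\rangle$ is the smallest substitution-closed class containing $\mathcal{C}$. *)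

theory Defs
  imports Main
begin

text \<open>Permutations of length n are lists of naturals that are permutations of [0..<n]
  (one-line notation, 0-based values).\<close>
definition is_perm :: "nat list \<Rightarrow> bool" where
  "is_perm p \<longleftrightarrow> distinct p \<and> set p = {0..<length p}"

definition contains :: "nat list \<Rightarrow> nat list \<Rightarrow> bool" where
  "contains \<pi> \<sigma> \<longleftrightarrow>
     (\<exists>f. strict_mono_on {..<length \<sigma>} f \<and> (\<forall>i<length \<sigma>. f i < length \<pi>) \<and>
          (\<forall>i<length \<sigma>. \<forall>j<length \<sigma>. \<sigma>!i < \<sigma>!j \<longleftrightarrow> \<pi>!(f i) < \<pi>!(f j)))"

definition perm_class :: "nat list set \<Rightarrow> bool" where
  "perm_class C \<longleftrightarrow> (\<forall>\<pi>\<in>C. is_perm \<pi>) \<and>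
     (\<forall>\<pi>\<in>C. \<forall>\<sigma>. is_perm \<sigma> \<and> contains \<pi> \<sigma> \<longrightarrow> \<sigma> \<in> C)"

definition basis :: "nat list set \<Rightarrow> nat list set" where
  "basis C = {\<beta>. is_perm \<beta> \<and> \<beta> \<notin> C \<and>
     (\<forall>\<sigma>. is_perm \<sigma> \<and> contains \<beta> \<sigma> \<and> \<sigma> \<noteq> \<beta> \<longrightarrow> \<sigma> \<in> C)}"

definition is_interval :: "nat list \<Rightarrow> nat set \<Rightarrow> bool" where
  "is_interval \<pi> I \<longleftrightarrow>
     (\<exists>a b. I = {a..<b} \<and> b \<le> length \<pi> \<and> (\<exists>c. (\<lambda>i. \<pi>!i) ` I = {c..<c + card I}))"

definition simple :: "nat list \<Rightarrow> bool" where
  "simple \<pi> \<longleftrightarrow> (\<forall>I. is_interval \<pi> I \<longrightarrow> card I = 0 \<or> card I = 1 \<or> card I = length \<pi>)"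

text \<open>Inflation \<sigma>[\<alpha>_1,...,\<alpha>_m]: block i is \<alpha>_i shifted by the total length of the
  blocks whose \<sigma>-value is smaller than \<sigma>(i).\<close>
definition inflate :: "nat list \<Rightarrow> nat list list \<Rightarrow> nat list" where
  "inflate \<sigma> \<alpha>s = concat (map (\<lambda>i. map (\<lambda>x. x +
       sum_list (map (\<lambda>l. length (\<alpha>s!l)) (filter (\<lambda>l. \<sigma>!l < \<sigma>!i) [0..<length \<sigma>])))
     (\<alpha>s!i)) [0..<length \<sigma>])"

definition subst_closed :: "nat list set \<Rightarrow> bool" where
  "subst_closed C \<longleftrightarrow> (\<forall>\<sigma>\<in>C. \<forall>\<alpha>s. length \<alpha>s = length \<sigma> \<and> (\<forall>\<alpha>\<in>set \<alpha>s. \<alpha> \<in> C \<and> \<alpha> \<noteq> [])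
       \<longrightarrow> inflate \<sigma> \<alpha>s \<in> C)"

definition subst_closure :: "nat list set \<Rightarrow> nat list set" where
  "subst_closure C = \<Inter>{D. perm_class D \<and> subst_closed D \<and> C \<subseteq> D}"

end

theory Submission
  imports Defs
begin

text \<open>
  Let beta be a basis element of the closure <C>.
  (1) beta is simple: a non-simple permutation is an inflation of proper patterns of
      itself, and these lie in the substitution-closed class <C>.
  (2) Simple permutations of <C> already lie in C, because a simple pattern of an
      inflation sigma[alphas] is a pattern of sigma or of one of the alphas.
  (3) By the Schmerl-Trotter theorem a simple permutation of length n >= 3 contains a
      simple proper pattern of length at least n - 2.  By minimality of beta this
      pattern lies in <C>, hence in C, so n - 2 <= k.
\<close>

section \<open>Blocks of point sets\<close>

(* A point set is a finite set S of positions together with a value map p (the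
   positions and values of some entries of a permutation). *)
definition separates :: "(nat \<Rightarrow> nat) \<Rightarrow> nat \<Rightarrow> nat set \<Rightarrow> bool" where
  "separates p z M \<longleftrightarrow> (\<exists>a\<in>M. \<exists>b\<in>M. (a < z \<and> z < b) \<or> (p a < p z \<and> p z < p b))"

(* A block of S: a subset that no other point of S separates.  For the full set of
   positions of a permutation these are exactly the intervals (block_is_interval). *)
definition is_block :: "(nat \<Rightarrow> nat) \<Rightarrow> nat set \<Rightarrow> nat set \<Rightarrow> bool" where
  "is_block p S M \<longleftrightarrow> M \<subseteq> S \<and> (\<forall>z\<in>S - M. \<not> separates p z M)"

definition simple_on :: "(nat \<Rightarrow> nat) \<Rightarrow> nat set \<Rightarrow> bool" where
  "simple_on p S \<longleftrightarrow> (\<forall>M. is_block p S M \<longrightarrow> card M \<le> 1 \<or> M = S)"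

lemma separates_mono: "separates p z M \<Longrightarrow> M \<subseteq> N \<Longrightarrow> separates p z N"
  unfolding separates_def by blast

lemma not_separates_singleton [simp]: "\<not> separates p z {u}"
  unfolding separates_def by auto

lemma separates_pair_iff:
  "separates p z {x,y} \<longleftrightarrow>
     (x < z \<and> z < y) \<or> (y < z \<and> z < x) \<or> (p x < p z \<and> p z < p y) \<or> (p y < p z \<and> p z < p x)"
  unfolding separates_def by auto

lemma is_blockI:
  "M \<subseteq> S \<Longrightarrow> (\<And>z. z \<in> S \<Longrightarrow> z \<notin> M \<Longrightarrow> \<not> separates p z M) \<Longrightarrow> is_block p S M"
  unfolding is_block_def by blast

lemma is_blockD: "is_block p S M \<Longrightarrow> z \<in> S \<Longrightarrow> z \<notin> M \<Longrightarrow> \<not> separates p z M"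
  unfolding is_block_def by blast

lemma is_block_subset: "is_block p S M \<Longrightarrow> M \<subseteq> S"
  unfolding is_block_def by blast

lemma is_block_restrict: "is_block p S M \<Longrightarrow> X \<subseteq> S \<Longrightarrow> is_block p X (M \<inter> X)"
  unfolding is_block_def by (meson Diff_iff Int_iff inf_le1 separates_mono subsetD inf_le2)

lemma simple_onD: "simple_on p S \<Longrightarrow> is_block p S M \<Longrightarrow> card M \<le> 1 \<or> M = S"
  unfolding simple_on_def by blast

lemma simple_on_card_le2:
  assumes "finite S" "card S \<le> 2" shows "simple_on p S"
  unfolding simple_on_def
proof (intro allI impI)
  fix M assume "is_block p S M"
  then have "M \<subseteq> S" by (rule is_block_subset)
  show "card M \<le> 1 \<or> M = S"
  proof (cases "card M \<le> 1")
    case False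
    then show ?thesis using card_seteq[OF assms(1) \<open>M \<subseteq> S\<close>] assms(2) by simp
  qed simp
qed

lemma subset_pair_card2:
  assumes "M \<subseteq> {a,b}" "card M \<ge> 2" shows "M = {a,b}"
proof -
  have "card {a,b} \<le> 2" by (cases "a = b") auto
  then show ?thesis using card_seteq[of "{a,b}" M] assms by simp
qed

lemma not_separates_pair_trans:
  assumes "\<not> separates p x {z,a}" "\<not> separates p x {z,b}" "x \<noteq> z" "p x \<noteq> p z"
  shows "\<not> separates p x {a,b}"
  using assms unfolding separates_pair_iff by linarith

lemma separatesE:
  assumes "separates p z M"
  obtains a b where "a \<in> M" "b \<in> M" "separates p z {a,b}"
  using assms unfolding separates_def separates_pair_iff by blast

lemma separates_pair_from_set:
  assumes "separates p w A" "u \<in> A" "w \<noteq> u" "p w \<noteq> p u"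
  shows "\<exists>t\<in>A. separates p w {u,t}"
proof -
  obtain a b where ab: "a \<in> A" "b \<in> A" "separates p w {a,b}"
    using assms(1) by (rule separatesE)
  have "separates p w {u,a} \<or> separates p w {u,b}"
    using ab(3) assms(3,4) unfolding separates_pair_iff by (cases "w < u"; cases "p w < p u") auto
  then show ?thesis using ab(1,2) by blast
qed

lemma crossing_pairs_impossible:
  assumes "separates p w {u,z}" "\<not> separates p v {u,z}"
    and "\<not> separates p u {v,w}" "\<not> separates p z {v,w}"
    and "v \<noteq> u" "v \<noteq> z" "p v \<noteq> p u" "p v \<noteq> p z"
  shows False
proof -
  have pos: "\<not> ((u < v \<and> v < z) \<or> (z < v \<and> v < u))" "\<not> ((v < u \<and> u < w) \<or> (w < u \<and> u < v))"
    "\<not> ((v < z \<and> z < w) \<or> (w < z \<and> z < v))"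
    and val: "\<not> ((p u < p v \<and> p v < p z) \<or> (p z < p v \<and> p v < p u))"
    "\<not> ((p v < p u \<and> p u < p w) \<or> (p w < p u \<and> p u < p v))"
    "\<not> ((p v < p z \<and> p z < p w) \<or> (p w < p z \<and> p z < p v))"
    using assms(2-4) unfolding separates_pair_iff by auto
  from assms(1) show False
    unfolding separates_pair_iff
  proof (elim disjE)
    assume "u < w \<and> w < z" then show False using pos assms(5,6) by linarith
  next
    assume "z < w \<and> w < u" then show False using pos assms(5,6) by linarith
  next
    assume "p u < p w \<and> p w < p z" then show False using val assms(7,8) by linarith
  next
    assume "p z < p w \<and> p w < p u" then show False using val assms(7,8) by linarith
  qed
qed

section \<open>Growing a simple subset by at most two points\<close>

(* If z is a twin of u (the pair {u,z} is a block of X + z) and X is simple with at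
   least three points, then z separates X; otherwise X - {u} would be a block of X. *)
lemma twin_separates:
  assumes sX: "simple_on p X" and fin: "finite X" and c3: "card X \<ge> 3"
    and u: "u \<in> X" and z: "z \<notin> X" and inj: "inj_on p (insert z X)"
    and twin: "is_block p (insert z X) {u,z}"
  shows "separates p z X"
proof (rule ccontr)
  assume nz: "\<not> separates p z X"
  have "is_block p X (X - {u})"
  proof (rule is_blockI)
    fix y assume "y \<in> X" "y \<notin> X - {u}"
    then have y: "y = u" by auto
    show "\<not> separates p y (X - {u})"
    proof
      assume "separates p y (X - {u})"
      then obtain a b where ab: "a \<in> X - {u}" "b \<in> X - {u}" "separates p u {a,b}"
        unfolding y by (rule separatesE)
      have "\<not> separates p a {z,u}" "\<not> separates p b {z,u}"
        using ab z is_blockD[OF twin] by (auto simp: insert_commute)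
      moreover have "\<not> separates p z {a,b}"
        using nz ab separates_mono[of p z "{a,b}" X] by blast
      moreover have "z \<noteq> a" "z \<noteq> b" using ab z by auto
      moreover have "p z \<noteq> p a" "p z \<noteq> p b"
        using inj_on_contraD[OF inj \<open>z \<noteq> a\<close>] inj_on_contraD[OF inj \<open>z \<noteq> b\<close>] ab by auto
      ultimately show False by (intro crossing_pairs_impossible[OF ab(3)])
    qed
  qed auto
  then show False using simple_onD[OF sX] c3 u fin by fastforce
qed

lemma nonsimple_extension_twin:
  assumes finX: "finite X" and sX: "simple_on p X" and z: "z \<notin> X" "separates p z X"
    and ns: "\<not> simple_on p (insert z X)"
  obtains u where "u \<in> X" "is_block p (insert z X) {u, z}"
proof -
  obtain M where M: "is_block p (insert z X) M" "card M \<ge> 2" "M \<noteq> insert z X"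
    using ns unfolding simple_on_def by force
  have Msub: "M \<subseteq> insert z X" using M(1) by (rule is_block_subset)
  have "M \<inter> X \<noteq> X"
  proof
    assume "M \<inter> X = X"
    then have "M = X" using Msub M(3) by auto
    then show False using is_blockD[OF M(1), of z] z by simp
  qed
  then have small: "card (M \<inter> X) \<le> 1"
    using simple_onD[OF sX is_block_restrict[OF M(1)]] by auto
  have "z \<in> M"
  proof (rule ccontr)
    assume "z \<notin> M"
    then have "M \<inter> X = M" using Msub by auto
    then show False using small M(2) by simp
  qed
  then have "M = insert z (M \<inter> X)" using Msub by auto
  moreover have "finite (M \<inter> X)" using finX by simp
  ultimately have "card (M \<inter> X) = 1" using small M(2) z(1)
    by (metis card_insert_disjoint Int_iff Suc_1 not_less_eq_eq le_antisym)
  then obtain u where "M \<inter> X = {u}" by (rule card_1_singletonE)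
  then have "u \<in> X" "M = {u, z}" using \<open>M = insert z (M \<inter> X)\<close> by auto
  then show ?thesis using that M(1) by blast
qed

(* X is simple with at least three points, z is a
   twin of u separating X, and w separates {u,z} without being a twin of u.
   Then X + z + w is simple; the four lemmas below rule out the possible traces
   M /\ X of a nontrivial block M. *)
context
  fixes p :: "nat \<Rightarrow> nat" and X :: "nat set" and u z w :: nat
  assumes finX: "finite X" and sX: "simple_on p X" and c3: "card X \<ge> 3"
    and inj: "inj_on p (insert w (insert z X))"
    and u: "u \<in> X" and z: "z \<notin> X" and twin: "is_block p (insert z X) {u,z}"
    and zX: "separates p z X"
    and w: "w \<notin> X" "w \<noteq> z" and wsep: "separates p w {u,z}"
    and notwin: "\<not> is_block p (insert w X) {u,w}"
begin

lemma two_point_twin_unseparated: "x \<in> X \<Longrightarrow> x \<noteq> u \<Longrightarrow> \<not> separates p x {z,u}"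
  using is_blockD[OF twin] z by (auto simp: insert_commute)

lemma two_point_distinct_z: "x \<in> X \<Longrightarrow> x \<noteq> z \<and> p x \<noteq> p z"
  using z inj_on_contraD[OF inj] by (metis insertCI)

lemma two_point_not_twins:
  assumes "\<And>x. x \<in> X \<Longrightarrow> x \<noteq> u \<Longrightarrow> \<not> separates p x {u,w}"
  shows False
proof -
  have "is_block p (insert w X) {u,w}" using assms u by (intro is_blockI) auto
  then show False using notwin by blast
qed

(* A block containing X contains z (which separates X) and then w. *)
lemma two_point_block_covering:
  assumes M: "is_block p (insert w (insert z X)) M" and "X \<subseteq> M"
  shows "M = insert w (insert z X)"
proof -
  have "z \<in> M" using is_blockD[OF M, of z] separates_mono[OF zX] assms(2) by blast
  then have "w \<in> M" using is_blockD[OF M, of w] separates_mono[OF wsep] u assms(2) by blast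
  then show ?thesis using \<open>z \<in> M\<close> assms(2) is_block_subset[OF M] by auto
qed

(* A nontrivial block avoiding X would be {z,w}, making w a twin of u. *)
lemma two_point_block_disjoint:
  assumes M: "is_block p (insert w (insert z X)) M" "card M \<ge> 2" and MX: "M \<inter> X = {}"
  shows False
proof -
  have "M = {z,w}" using is_block_subset[OF M(1)] M(2) MX by (intro subset_pair_card2) auto
  show False
  proof (rule two_point_not_twins)
    fix x assume x: "x \<in> X" "x \<noteq> u"
    have "\<not> separates p x {z,w}" using is_blockD[OF M(1), of x] x MX \<open>M = {z,w}\<close> by auto
    then show "\<not> separates p x {u,w}"
      using not_separates_pair_trans[OF two_point_twin_unseparated[OF x]] two_point_distinct_z[OF x(1)]
      by blast
  qed
qed

(* A nontrivial block meeting X only in u either makes w a twin of u or is {u,z},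
   which w separates. *)
lemma two_point_block_at_u:
  assumes M: "is_block p (insert w (insert z X)) M" "card M \<ge> 2" and MX: "M \<inter> X = {u}"
  shows False
proof (cases "w \<in> M")
  case True
  show False
  proof (rule two_point_not_twins)
    fix x assume x: "x \<in> X" "x \<noteq> u"
    then have "\<not> separates p x M" using is_blockD[OF M(1)] MX by blast
    then show "\<not> separates p x {u,w}" using separates_mono[of p x "{u,w}" M] MX True by blast
  qed
next
  case False
  then have "M = {u,z}" using is_block_subset[OF M(1)] M(2) MX by (intro subset_pair_card2) auto
  then show False using is_blockD[OF M(1), of w] False wsep by simp
qed

(* A nontrivial block meeting X only in v /= u either makes {u,v} a block of X or is
   {v,w}, which is geometrically impossible. *)
lemma two_point_block_elsewhere:
  assumes M: "is_block p (insert w (insert z X)) M" "card M \<ge> 2"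
    and MX: "M \<inter> X = {v}" and "v \<noteq> u"
  shows False
proof -
  have v: "v \<in> X" "v \<in> M" using MX by auto
  show False
  proof (cases "z \<in> M")
    case True
    have "is_block p X {u,v}"
    proof (rule is_blockI)
      fix x assume x: "x \<in> X" "x \<notin> {u,v}"
      then have "\<not> separates p x {z,v}"
        using is_blockD[OF M(1), of x] separates_mono[of p x "{z,v}" M] MX v True by blast
      then show "\<not> separates p x {u,v}"
        using not_separates_pair_trans[OF two_point_twin_unseparated] two_point_distinct_z x by blast
    qed (use u v in auto)
    then have "card {u,v} \<le> 1 \<or> {u,v} = X" by (rule simple_onD[OF sX])
    then show False using \<open>v \<noteq> u\<close> c3 by auto
  next
    case False
    then have "M = {v,w}" using is_block_subset[OF M(1)] M(2) MX by (intro subset_pair_card2) auto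
    have "u \<notin> M" using MX u \<open>v \<noteq> u\<close> by auto
    have "p v \<noteq> p u" using \<open>v \<noteq> u\<close> inj_on_contraD[OF inj] u v by auto
    then show False
      using crossing_pairs_impossible[OF wsep _ _ _ \<open>v \<noteq> u\<close> _ _ two_point_distinct_z[OF v(1), THEN conjunct2]]
        two_point_twin_unseparated[OF v(1)] is_blockD[OF M(1), of u] is_blockD[OF M(1), of z]
        \<open>u \<notin> M\<close> False \<open>M = {v,w}\<close> u two_point_distinct_z[OF v(1)]
      by (auto simp: insert_commute)
  qed
qed

lemma simple_two_point_extension: "simple_on p (insert w (insert z X))"
  unfolding simple_on_def
proof (intro allI impI)
  fix M assume M: "is_block p (insert w (insert z X)) M"
  show "card M \<le> 1 \<or> M = insert w (insert z X)"
  proof (rule ccontr)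
    assume "\<not> (card M \<le> 1 \<or> M = insert w (insert z X))"
    then have c2: "card M \<ge> 2" "M \<noteq> insert w (insert z X)" by auto
    have "card (M \<inter> X) \<le> 1 \<or> M \<inter> X = X"
      using simple_onD[OF sX is_block_restrict[OF M]] by auto
    then consider "M \<inter> X = X" | "M \<inter> X = {}" | v where "M \<inter> X = {v}"
      using finX by (metis card_0_eq card_1_singletonE finite_Int le_SucE le_zero_eq One_nat_def)
    then show False
    proof cases
      case 1
      then show False using two_point_block_covering[OF M] c2(2) by blast
    next
      case 2
      then show False using two_point_block_disjoint[OF M c2(1)] by blast
    next
      case (3 v)
      then show False
        using two_point_block_at_u[OF M c2(1)] two_point_block_elsewhere[OF M c2(1)] by blast
    qed
  qed
qed

end

(* Given one twin z0 of u outside X, the set of u and all its twins outside X is a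
   proper nontrivial subset of the simple set S, hence separated by some w; w then
   separates u from one of its twins z and is not itself a twin of u. *)
lemma twin_separated_by_non_twin:
  assumes fin: "finite S" and inj: "inj_on p S" and sS: "simple_on p S" and XS: "X \<subseteq> S"
    and u: "u \<in> X" and z0: "z0 \<in> S" "z0 \<notin> X" "is_block p (insert z0 X) {u, z0}"
    and v: "v \<in> X" "v \<noteq> u"
  obtains z w where "z \<in> S" "z \<notin> X" "is_block p (insert z X) {u,z}"
    "w \<in> S" "w \<notin> X" "w \<noteq> z" "separates p w {u,z}" "\<not> is_block p (insert w X) {u,w}"
proof -
  define A where "A = insert u {t \<in> S - X. is_block p (insert t X) {u,t}}"
  have AS: "A \<subseteq> S" using u XS unfolding A_def by auto
  have "{u, z0} \<subseteq> A" using z0 u unfolding A_def by auto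
  then have "card {u, z0} \<le> card A" by (rule card_mono[OF finite_subset[OF AS fin]])
  then have cA: "card A \<ge> 2" using u z0(2) by (cases "u = z0") auto
  have "v \<notin> A" using v unfolding A_def by auto
  then have "A \<noteq> S" using v XS by auto
  have "\<not> is_block p S A"
  proof
    assume "is_block p S A"
    then have "card A \<le> 1 \<or> A = S" by (rule simple_onD[OF sS])
    then show False using cA \<open>A \<noteq> S\<close> by auto
  qed
  then obtain w where w: "w \<in> S" "w \<notin> A" "separates p w A"
    using AS unfolding is_block_def by auto
  have "w \<noteq> u" using w unfolding A_def by auto
  then have "p w \<noteq> p u" using inj_on_contraD[OF inj] w(1) u XS by auto
  then obtain z where zA: "z \<in> A" and wz: "separates p w {u,z}"
    using separates_pair_from_set[OF w(3) _ \<open>w \<noteq> u\<close>] unfolding A_def by blast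
  have "z \<noteq> u" using wz by auto
  then have z: "z \<in> S" "z \<notin> X" "is_block p (insert z X) {u,z}" using zA unfolding A_def by auto
  have wX: "w \<notin> X"
  proof
    assume "w \<in> X"
    then show False using is_blockD[OF z(3), of w] z(2) \<open>w \<noteq> u\<close> wz by auto
  qed
  have "\<not> is_block p (insert w X) {u,w}" using w wX unfolding A_def by auto
  moreover have "w \<noteq> z" using w zA by auto
  ultimately show ?thesis using that z w(1) wX wz by blast
qed

theorem simple_growth:
  assumes fin: "finite S" and inj: "inj_on p S" and sS: "simple_on p S"
    and XS: "X \<subseteq> S" "X \<noteq> S" and sX: "simple_on p X" and c3: "card X \<ge> 3"
  shows "\<exists>Y. X \<subset> Y \<and> Y \<subseteq> S \<and> card Y \<le> card X + 2 \<and> simple_on p Y"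
proof -
  have finX: "finite X" using XS(1) fin by (rule finite_subset)
  show ?thesis
  proof (cases "\<exists>z\<in>S - X. simple_on p (insert z X)")
    case True
    then obtain z where "z \<in> S - X" "simple_on p (insert z X)" by blast
    then show ?thesis using XS finX by (intro exI[of _ "insert z X"]) auto
  next
    case False
    have "\<not> is_block p S X"
    proof
      assume "is_block p S X"
      then have "card X \<le> 1 \<or> X = S" by (rule simple_onD[OF sS])
      then show False using c3 XS(2) by auto
    qed
    then obtain z0 where z0: "z0 \<in> S" "z0 \<notin> X" "separates p z0 X"
      using XS(1) unfolding is_block_def by auto
    obtain u where u: "u \<in> X" "is_block p (insert z0 X) {u, z0}"
      using nonsimple_extension_twin[OF finX sX z0(2,3)] False z0(1,2) by blast
    have "\<not> X \<subseteq> {u}" using c3 card_mono[of "{u}" X] by auto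
    then obtain v where v: "v \<in> X" "v \<noteq> u" by blast
    obtain z w where z: "z \<in> S" "z \<notin> X" "is_block p (insert z X) {u,z}"
      and w: "w \<in> S" "w \<notin> X" "w \<noteq> z" "separates p w {u,z}" "\<not> is_block p (insert w X) {u,w}"
      using twin_separated_by_non_twin[OF fin inj sS XS(1) u(1) z0(1,2) u(2) v] by blast
    have inj': "inj_on p (insert w (insert z X))" by (rule inj_on_subset[OF inj]) (use w(1) z(1) XS(1) in auto)
    have "separates p z X"
      using twin_separates[OF sX finX c3 u(1) z(2) inj_on_subset[OF inj'] z(3)] by auto
    then show ?thesis
      using simple_two_point_extension[OF finX sX c3 inj' u(1) z(2,3) _ w(2,3,4,5)]
        w(1,2,3) z(1,2) XS(1) finX
      by (intro exI[of _ "insert w (insert z X)"]) auto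
  qed
qed

section \<open>Separable point sets and the Schmerl-Trotter theorem\<close>

lemma is_block_between:
  assumes "is_block p S M" "z \<in> S" "x \<in> M" "y \<in> M" "(x < z \<and> z < y) \<or> (p x < p z \<and> p z < p y)"
  shows "z \<in> M"
  using assms unfolding is_block_def separates_def by blast

lemma two_elements:
  assumes "finite M" "card M \<ge> 2" obtains x y where "x \<in> M" "y \<in> M" "x \<noteq> y"
proof -
  have "\<not> card M \<le> Suc 0" using assms by auto
  then show ?thesis using card_le_Suc0_iff_eq[OF assms(1)] that by blast
qed

(* The patterns 2413 and 3142 are simple. *)
lemma simple_on_2413:
  assumes o: "a < b" "b < c" "c < d" "p c < p a" "p a < p d" "p d < p b"
  shows "simple_on p {a,b,c,d}"
  unfolding simple_on_def
proof (intro allI impI)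
  fix M assume M: "is_block p {a,b,c,d} M"
  have Ms: "M \<subseteq> {a,b,c,d}" using M by (rule is_block_subset)
  show "card M \<le> 1 \<or> M = {a,b,c,d}"
  proof (rule ccontr)
    assume nc: "\<not> (card M \<le> 1 \<or> M = {a,b,c,d})"
    have "finite M" using Ms by (rule finite_subset) simp
    moreover have "card M \<ge> 2" using nc by auto
    ultimately obtain x y where xy: "x \<in> M" "y \<in> M" "x \<noteq> y" by (rule two_elements)
    have "a \<in> M \<Longrightarrow> c \<in> M \<Longrightarrow> b \<in> M" "b \<in> M \<Longrightarrow> d \<in> M \<Longrightarrow> c \<in> M"
      "a \<in> M \<Longrightarrow> d \<in> M \<Longrightarrow> b \<in> M" "c \<in> M \<Longrightarrow> d \<in> M \<Longrightarrow> a \<in> M"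
      "a \<in> M \<Longrightarrow> b \<in> M \<Longrightarrow> d \<in> M" "c \<in> M \<Longrightarrow> b \<in> M \<Longrightarrow> a \<in> M"
      using is_block_between[OF M] o by simp_all
    then have "M = {a,b,c,d}" using xy Ms by blast
    then show False using nc by auto
  qed
qed

lemma simple_on_3142:
  assumes o: "a < b" "b < c" "c < d" "p b < p d" "p d < p a" "p a < p c"
  shows "simple_on p {a,b,c,d}"
  unfolding simple_on_def
proof (intro allI impI)
  fix M assume M: "is_block p {a,b,c,d} M"
  have Ms: "M \<subseteq> {a,b,c,d}" using M by (rule is_block_subset)
  show "card M \<le> 1 \<or> M = {a,b,c,d}"
  proof (rule ccontr)
    assume nc: "\<not> (card M \<le> 1 \<or> M = {a,b,c,d})"
    have "finite M" using Ms by (rule finite_subset) simp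
    moreover have "card M \<ge> 2" using nc by auto
    ultimately obtain x y where xy: "x \<in> M" "y \<in> M" "x \<noteq> y" by (rule two_elements)
    have "a \<in> M \<Longrightarrow> c \<in> M \<Longrightarrow> b \<in> M" "b \<in> M \<Longrightarrow> d \<in> M \<Longrightarrow> c \<in> M"
      "a \<in> M \<Longrightarrow> d \<in> M \<Longrightarrow> b \<in> M" "b \<in> M \<Longrightarrow> a \<in> M \<Longrightarrow> d \<in> M"
      "d \<in> M \<Longrightarrow> c \<in> M \<Longrightarrow> a \<in> M" "b \<in> M \<Longrightarrow> c \<in> M \<Longrightarrow> d \<in> M"
      using is_block_between[OF M] o by simp_all
    then have "M = {a,b,c,d}" using xy Ms by blast
    then show False using nc by auto
  qed
qed

definition sum_split :: "(nat \<Rightarrow> nat) \<Rightarrow> nat set \<Rightarrow> nat set \<Rightarrow> bool" where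
  "sum_split p A B \<longleftrightarrow> (\<forall>a\<in>A. \<forall>b\<in>B. a < b \<and> p a < p b)"

definition skew_split :: "(nat \<Rightarrow> nat) \<Rightarrow> nat set \<Rightarrow> nat set \<Rightarrow> bool" where
  "skew_split p A B \<longleftrightarrow> (\<forall>a\<in>A. \<forall>b\<in>B. a < b \<and> p b < p a)"

definition decomposable :: "(nat \<Rightarrow> nat) \<Rightarrow> nat set \<Rightarrow> bool" where
  "decomposable p P \<longleftrightarrow>
     (\<exists>A B. A \<noteq> {} \<and> B \<noteq> {} \<and> A \<union> B = P \<and> (sum_split p A B \<or> skew_split p A B))"

lemma decomposableI:
  "A \<noteq> {} \<Longrightarrow> B \<noteq> {} \<Longrightarrow> A \<union> B = P \<Longrightarrow> sum_split p A B \<or> skew_split p A B \<Longrightarrow> decomposable p P"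
  unfolding decomposable_def by blast

lemma split_parts_are_blocks:
  assumes "sum_split p A B \<or> skew_split p A B"
  shows "is_block p (A \<union> B) A" "is_block p (A \<union> B) B"
  using assms unfolding is_block_def separates_def sum_split_def skew_split_def
  by (auto, (meson less_asym)+)

lemma decomposable_not_simple:
  assumes "finite S" "card S \<ge> 3" "decomposable p S"
  shows "\<not> simple_on p S"
proof
  assume sS: "simple_on p S"
  obtain A B where AB: "A \<noteq> {}" "B \<noteq> {}" "A \<union> B = S" "sum_split p A B \<or> skew_split p A B"
    using assms(3) unfolding decomposable_def by blast
  have "A \<inter> B = {}" using AB(4) unfolding sum_split_def skew_split_def by fastforce
  have "A \<noteq> S" "B \<noteq> S" using AB(1,2,3) \<open>A \<inter> B = {}\<close> by auto
  then have "card A \<le> 1" "card B \<le> 1"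
    using simple_onD[OF sS] split_parts_are_blocks[OF AB(4)] AB(3) by auto
  moreover have "card S = card A + card B"
    using AB(3) \<open>A \<inter> B = {}\<close> assms(1) by (metis card_Un_disjoint finite_Un)
  ultimately show False using assms(2) by linarith
qed

lemma card_four: "a < b \<Longrightarrow> b < c \<Longrightarrow> c < (d::nat) \<Longrightarrow> card {a,b,c,d} = 4"
  by auto

(* Induction step for decomposability: add the point t of largest value to a
   sum-decomposed set.  If t falls inside the left part A, the left part splits at t;
   a point of A left of t lying above a point of A right of t would create 2413. *)
lemma decomposable_insert_max_sum:
  assumes AB: "A \<noteq> {}" "B \<noteq> {}" "sum_split p A B"
    and t: "t \<notin> A \<union> B" "\<And>q. q \<in> A \<union> B \<Longrightarrow> p q < p t"
    and inj: "inj_on p A"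
    and no4: "\<And>a b c d. {a,b,c,d} \<subseteq> insert t (A \<union> B) \<Longrightarrow> a < b \<Longrightarrow> b < c \<Longrightarrow> c < d
      \<Longrightarrow> \<not> simple_on p {a,b,c,d}"
  shows "decomposable p (insert t (A \<union> B))"
proof (cases "\<forall>a\<in>A. a < t")
  case True
  show ?thesis
    by (rule decomposableI[of A "insert t B"]) (use AB t True in \<open>auto simp: sum_split_def\<close>)
next
  case False
  then obtain a2 where a2: "a2 \<in> A" "t < a2" using t(1) by (auto simp: not_less le_less)
  show ?thesis
  proof (cases "\<forall>x\<in>A \<union> B. t < x")
    case True
    show ?thesis
      by (rule decomposableI[of "{t}" "A \<union> B"]) (use AB True t in \<open>auto simp: skew_split_def\<close>)
  next
    case False
    then obtain a1 where a1: "a1 \<in> A \<union> B" "a1 < t" using t(1) by (auto simp: not_less le_less)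
    have "a1 \<in> A"
    proof (rule ccontr)
      assume "a1 \<notin> A"
      then have "a2 < a1" using a1(1) a2(1) AB(3) unfolding sum_split_def by blast
      then show False using a1(2) a2(2) by simp
    qed
    define L where "L = {a\<in>A. a < t}"
    define R where "R = {a\<in>A. t < a}"
    have LR: "p l < p r" if l: "l \<in> L" and r: "r \<in> R" for l r
    proof (rule ccontr)
      assume "\<not> p l < p r"
      moreover have "l \<noteq> r" using l r unfolding L_def R_def by auto
      moreover have "p l \<noteq> p r" using inj_on_contraD[OF inj \<open>l \<noteq> r\<close>] l r unfolding L_def R_def by blast
      moreover obtain b where b: "b \<in> B" using AB(2) by auto
      moreover have "r < b" "p l < p b" "p b < p t" using AB(3) t(2) l r b unfolding sum_split_def L_def R_def by auto
      ultimately show False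
        using simple_on_2413[of l t r b p] no4[of l t r b] l r unfolding L_def R_def by auto
    qed
    have "A = L \<union> R" using t(1) unfolding L_def R_def by (auto simp: not_less le_less)
    then show ?thesis
      using \<open>a1 \<in> A\<close> a1(2) LR AB(3) t(2)
      by (intro decomposableI[of L "R \<union> B \<union> {t}"]) (auto simp: sum_split_def L_def R_def)
  qed
qed

(* The same for a skew-decomposed set, where the forbidden pattern is 3142. *)
lemma decomposable_insert_max_skew:
  assumes AB: "A \<noteq> {}" "B \<noteq> {}" "skew_split p A B"
    and t: "t \<notin> A \<union> B" "\<And>q. q \<in> A \<union> B \<Longrightarrow> p q < p t"
    and inj: "inj_on p B"
    and no4: "\<And>a b c d. {a,b,c,d} \<subseteq> insert t (A \<union> B) \<Longrightarrow> a < b \<Longrightarrow> b < c \<Longrightarrow> c < d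
      \<Longrightarrow> \<not> simple_on p {a,b,c,d}"
  shows "decomposable p (insert t (A \<union> B))"
proof (cases "\<forall>b\<in>B. t < b")
  case True
  show ?thesis
    by (rule decomposableI[of "insert t A" B]) (use AB t True in \<open>auto simp: skew_split_def\<close>)
next
  case False
  then obtain b1 where b1: "b1 \<in> B" "b1 < t" using t(1) by (auto simp: not_less le_less)
  show ?thesis
  proof (cases "\<forall>x\<in>A \<union> B. x < t")
    case True
    show ?thesis
      by (rule decomposableI[of "A \<union> B" "{t}"]) (use AB True t in \<open>auto simp: sum_split_def\<close>)
  next
    case False
    then obtain b2 where b2: "b2 \<in> A \<union> B" "t < b2" using t(1) by (auto simp: not_less le_less)
    have "b2 \<in> B"
    proof (rule ccontr)
      assume "b2 \<notin> B"
      then have "b2 < b1" using b1(1) b2(1) AB(3) unfolding skew_split_def by blast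
      then show False using b1(2) b2(2) by simp
    qed
    define L where "L = {b\<in>B. b < t}"
    define R where "R = {b\<in>B. t < b}"
    have LR: "p r < p l" if l: "l \<in> L" and r: "r \<in> R" for l r
    proof (rule ccontr)
      assume "\<not> p r < p l"
      moreover have "l \<noteq> r" using l r unfolding L_def R_def by auto
      moreover have "p l \<noteq> p r" using inj_on_contraD[OF inj \<open>l \<noteq> r\<close>] l r unfolding L_def R_def by blast
      moreover obtain a where a: "a \<in> A" using AB(1) by auto
      moreover have "a < l" "p r < p a" "p a < p t" using AB(3) t(2) l r a unfolding skew_split_def L_def R_def by auto
      ultimately show False
        using simple_on_3142[of a l t r p] no4[of a l t r] l r unfolding L_def R_def by auto
    qed
    have "B = L \<union> R" using t(1) unfolding L_def R_def by (auto simp: not_less le_less)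
    then show ?thesis
      using \<open>b2 \<in> B\<close> b2(2) LR AB(3) t(2)
      by (intro decomposableI[of "A \<union> L \<union> {t}" R]) (auto simp: skew_split_def L_def R_def)
  qed
qed

(* A point set with no simple four-point subset (no 2413 or 3142) is decomposable
   (separable); by induction, removing the point of largest value. *)
lemma decomposable_if_no_simple4:
  assumes "finite P" "inj_on p P" "card P \<ge> 2" "\<And>T. T \<subseteq> P \<Longrightarrow> card T = 4 \<Longrightarrow> \<not> simple_on p T"
  shows "decomposable p P"
  using assms
proof (induction "card P" arbitrary: P rule: less_induct)
  case less
  show ?case
  proof (cases "card P = 2")
    case True
    then obtain x y where P: "P = {x,y}" "x < y" by (metis card_2_iff linorder_neqE_nat insert_commute)
    have "p x \<noteq> p y" using less.prems(2) P unfolding inj_on_def by auto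
    then show ?thesis
      by (cases "p x < p y")
        (rule decomposableI[of "{x}" "{y}"], use P in \<open>auto simp: sum_split_def skew_split_def\<close>)+
  next
    case False
    then have c3: "card P \<ge> 3" using less.prems(3) by auto
    have fin: "finite P" and inj: "inj_on p P" using less.prems by auto
    obtain t where t: "t \<in> P" "p t = Max (p ` P)"
      using Max_in[of "p ` P"] fin c3 by fastforce
    have tmax: "p q < p t" if "q \<in> P" "q \<noteq> t" for q
    proof -
      have "p q \<le> p t" using t that fin by simp
      moreover have "p q \<noteq> p t" using inj_on_contraD[OF inj \<open>q \<noteq> t\<close>] that t by blast
      ultimately show ?thesis by simp
    qed
    let ?P' = "P - {t}"
    have "card ?P' < card P" "card ?P' \<ge> 2" using t fin c3 by (auto simp: card_Diff_singleton)
    then have "decomposable p ?P'"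
      using less.hyps fin inj less.prems(4) by (meson Diff_subset finite_Diff inj_on_subset order.trans)
    then obtain A B where AB: "A \<noteq> {}" "B \<noteq> {}" "A \<union> B = ?P'" "sum_split p A B \<or> skew_split p A B"
      unfolding decomposable_def by blast
    have P: "P = insert t (A \<union> B)" and tAB: "t \<notin> A \<union> B" using AB(3) t(1) by auto
    have ltt: "\<And>q. q \<in> A \<union> B \<Longrightarrow> p q < p t" using tmax AB(3) by auto
    have injAB: "inj_on p A" "inj_on p B" using inj AB(3) by (auto intro: inj_on_subset)
    have no4: "\<not> simple_on p {a,b,c,d}" if "{a,b,c,d} \<subseteq> P" "a < b" "b < c" "c < d" for a b c d
      using less.prems(4)[OF that(1)] card_four[OF that(2-4)] by blast
    from AB(4) show ?thesis
      using decomposable_insert_max_sum[OF AB(1,2) _ tAB ltt injAB(1)]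
        decomposable_insert_max_skew[OF AB(1,2) _ tAB ltt injAB(2)] no4
      unfolding P by blast
  qed
qed

lemma simple_contains_simple4:
  assumes "finite S" "inj_on p S" "simple_on p S" "card S \<ge> 3"
  shows "\<exists>T\<subseteq>S. card T = 4 \<and> simple_on p T"
  using decomposable_if_no_simple4[of S p] decomposable_not_simple[of S p] assms by force

(* Take a maximal proper simple subset T with at
   least three points (a simple four-point subset exists); by simple_growth T has
   at least n - 2 points. *)
theorem schmerl_trotter:
  assumes fin: "finite S" and inj: "inj_on p S" and sS: "simple_on p S" and c5: "card S \<ge> 5"
  shows "\<exists>T. T \<subseteq> S \<and> T \<noteq> S \<and> simple_on p T \<and> card T + 2 \<ge> card S"
proof -
  define F where "F = {T. T \<subseteq> S \<and> T \<noteq> S \<and> simple_on p T \<and> card T \<ge> 3}"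
  obtain Q where "Q \<subseteq> S" "card Q = 4" "simple_on p Q"
    using simple_contains_simple4[OF fin inj sS] c5 by auto
  then have "Q \<in> F" using c5 unfolding F_def by auto
  moreover have finF: "finite F" using fin unfolding F_def by simp
  ultimately obtain T where TF: "T \<in> F" and maxT: "\<And>T'. T' \<in> F \<Longrightarrow> card T' \<le> card T"
    using Max_in[of "card ` F"] Max_ge[of "card ` F"] by (metis empty_iff finite_imageI image_iff image_is_empty)
  have T: "T \<subseteq> S" "T \<noteq> S" "simple_on p T" "card T \<ge> 3" using TF unfolding F_def by auto
  obtain Y where Y: "T \<subset> Y" "Y \<subseteq> S" "card Y \<le> card T + 2" "simple_on p Y"
    using simple_growth[OF fin inj sS T] by blast
  have "card T < card Y" using Y(1,2) fin by (meson finite_subset psubset_card_mono)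
  then have "Y = S" using maxT[of Y] Y T(4) unfolding F_def by fastforce
  then show ?thesis using T Y by auto
qed

section \<open>Permutations: intervals, simplicity and patterns\<close>

lemma perm_nth_lt: "is_perm \<pi> \<Longrightarrow> i < length \<pi> \<Longrightarrow> \<pi>!i < length \<pi>"
  unfolding is_perm_def by (metis atLeastLessThan_iff nth_mem)

lemma perm_inj: "is_perm \<pi> \<Longrightarrow> inj_on (nth \<pi>) {..<length \<pi>}"
  unfolding is_perm_def inj_on_def by (simp add: nth_eq_iff_index_eq)

lemma perm_surj: "is_perm \<pi> \<Longrightarrow> v < length \<pi> \<Longrightarrow> \<exists>l<length \<pi>. \<pi>!l = v"
  unfolding is_perm_def by (metis atLeastLessThan_iff in_set_conv_nth zero_le)

lemma perm_rank:
  assumes "is_perm \<pi>" "i < length \<pi>"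
  shows "card {l. l < length \<pi> \<and> \<pi>!l < \<pi>!i} = \<pi>!i"
proof -
  have "nth \<pi> ` {l. l < length \<pi> \<and> \<pi>!l < \<pi>!i} = {..<\<pi>!i}"
  proof
    show "{..<\<pi>!i} \<subseteq> nth \<pi> ` {l. l < length \<pi> \<and> \<pi>!l < \<pi>!i}"
    proof
      fix v assume "v \<in> {..<\<pi>!i}"
      moreover then obtain l where "l < length \<pi>" "\<pi>!l = v"
        using perm_nth_lt[OF assms] perm_surj[OF assms(1)] by (meson lessThan_iff order.strict_trans)
      ultimately show "v \<in> nth \<pi> ` {l. l < length \<pi> \<and> \<pi>!l < \<pi>!i}" by auto
    qed
  qed auto
  moreover have "inj_on (nth \<pi>) {l. l < length \<pi> \<and> \<pi>!l < \<pi>!i}"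
    using perm_inj[OF assms(1)] by (rule inj_on_subset) auto
  ultimately show ?thesis using card_image by fastforce
qed

(* Intervals of a permutation are blocks of its set of positions and conversely, so
   simplicity of permutations is simplicity of point sets. *)
lemma interval_is_block:
  assumes perm: "is_perm \<pi>" and I: "is_interval \<pi> I"
  shows "is_block (nth \<pi>) {..<length \<pi>} I"
proof -
  obtain a b c where I: "I = {a..<b}" "b \<le> length \<pi>" "nth \<pi> ` I = {c..<c + card I}"
    using I unfolding is_interval_def by blast
  show ?thesis
  proof (rule is_blockI)
    show "I \<subseteq> {..<length \<pi>}" using I by auto
    fix z assume z: "z \<in> {..<length \<pi>}" "z \<notin> I"
    show "\<not> separates (nth \<pi>) z I"
    proof
      assume "separates (nth \<pi>) z I"
      then obtain x y where xy: "x \<in> I" "y \<in> I" "(x < z \<and> z < y) \<or> (\<pi>!x < \<pi>!z \<and> \<pi>!z < \<pi>!y)"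
        unfolding separates_def by blast
      have "\<pi>!x \<in> {c..<c + card I}" "\<pi>!y \<in> {c..<c + card I}"
        using xy I(3) by (auto simp del: card_atLeastLessThan)
      then have "\<pi>!z \<in> nth \<pi> ` I"
        using xy z I by (auto simp del: card_atLeastLessThan)
      then show False using inj_onD[OF perm_inj[OF perm]] z I by fastforce
    qed
  qed
qed

lemma block_positions_contiguous:
  assumes M: "is_block p {..<n} M" "M \<noteq> {}"
  shows "M = {Min M..<Suc (Max M)}"
proof -
  have fM: "finite M" using is_block_subset[OF M(1)] finite_subset by blast
  have "x \<in> M" if x: "Min M \<le> x" "x \<le> Max M" for x
  proof (rule ccontr)
    assume xM: "x \<notin> M"
    have ends: "Min M \<in> M" "Max M \<in> M" using fM M(2) by auto
    then have "Min M < x" "x < Max M" using x xM by (auto simp: le_less)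
    then have "separates p x M" using ends unfolding separates_def by blast
    moreover have "x < n" using \<open>x < Max M\<close> ends is_block_subset[OF M(1)] by auto
    ultimately show False using is_blockD[OF M(1)] xM by blast
  qed
  then show ?thesis using fM by (auto simp: less_Suc_eq_le)
qed

lemma block_values_contiguous:
  assumes perm: "is_perm \<pi>" and M: "is_block (nth \<pi>) {..<length \<pi>} M" "M \<noteq> {}"
  shows "nth \<pi> ` M = {Min (nth \<pi> ` M)..Max (nth \<pi> ` M)}" (is "?V = _")
proof -
  have Ms: "M \<subseteq> {..<length \<pi>}" using M(1) by (rule is_block_subset)
  have fV: "finite ?V" "?V \<noteq> {}" using M(2) finite_subset[OF Ms] by auto
  have "v \<in> ?V" if v: "Min ?V \<le> v" "v \<le> Max ?V" for v
  proof (rule ccontr)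
    assume vV: "v \<notin> ?V"
    obtain x y where xy: "x \<in> M" "\<pi>!x = Min ?V" "y \<in> M" "\<pi>!y = Max ?V"
      using Min_in[OF fV] Max_in[OF fV] by auto
    have "y < length \<pi>" using xy(3) Ms by auto
    then have "v < length \<pi>" using perm_nth_lt[OF perm] v(2) xy(4) by fastforce
    then obtain z where z: "z < length \<pi>" "\<pi>!z = v" using perm_surj[OF perm] by blast
    have "z \<notin> M" using vV z by auto
    moreover have "Min ?V \<noteq> v" "Max ?V \<noteq> v" using Min_in[OF fV] Max_in[OF fV] vV by auto
    then have "\<pi>!x < \<pi>!z \<and> \<pi>!z < \<pi>!y" using v xy(2,4) z(2) by simp
    then have "separates (nth \<pi>) z M" using xy unfolding separates_def by blast
    ultimately show False using is_blockD[OF M(1)] z by blast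
  qed
  moreover have "?V \<subseteq> {Min ?V..Max ?V}" using Min_le[OF fV(1)] Max_ge[OF fV(1)] by auto
  ultimately show ?thesis by (intro equalityI subsetI) auto
qed

lemma block_is_interval:
  assumes perm: "is_perm \<pi>" and M: "is_block (nth \<pi>) {..<length \<pi>} M" "M \<noteq> {}"
  shows "is_interval \<pi> M"
proof -
  let ?V = "nth \<pi> ` M"
  have Ms: "M \<subseteq> {..<length \<pi>}" using M(1) by (rule is_block_subset)
  have pos: "M = {Min M..<Suc (Max M)}" using block_positions_contiguous[OF M] .
  have "Max M < length \<pi>" using Ms M(2) finite_subset[OF Ms] by auto
  have "card ?V = card M" using card_image inj_on_subset[OF perm_inj[OF perm] Ms] by blast
  moreover have V: "?V = {Min ?V..Max ?V}" using block_values_contiguous[OF perm M] .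
  ultimately have "card {Min ?V..Max ?V} = card M" by simp
  moreover have "Min ?V \<le> Max ?V" using M(2) finite_subset[OF Ms] by simp
  ultimately have "Max ?V = Min ?V + card M - 1" by auto
  moreover have "card M \<ge> 1" using M(2) finite_subset[OF Ms] by (simp add: Suc_le_eq card_gt_0_iff)
  ultimately have "Suc (Max ?V) = Min ?V + card M" by simp
  then have Vint: "?V = {Min ?V..<Min ?V + card M}" using V atLeastLessThanSuc_atLeastAtMost by metis
  show ?thesis unfolding is_interval_def
  proof (intro exI conjI)
    show "M = {Min M..<Suc (Max M)}" by (rule pos)
    show "Suc (Max M) \<le> length \<pi>" using \<open>Max M < length \<pi>\<close> by simp
    show "(\<lambda>i. \<pi>!i) ` M = {Min ?V..<Min ?V + card M}" by (rule Vint)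
  qed
qed

lemma simple_iff_simple_on:
  assumes perm: "is_perm \<pi>"
  shows "simple \<pi> \<longleftrightarrow> simple_on (nth \<pi>) {..<length \<pi>}"
proof
  assume s: "simple \<pi>"
  show "simple_on (nth \<pi>) {..<length \<pi>}"
    unfolding simple_on_def
  proof (intro allI impI)
    fix M assume M: "is_block (nth \<pi>) {..<length \<pi>} M"
    show "card M \<le> 1 \<or> M = {..<length \<pi>}"
    proof (cases "M = {}")
      case False
      then have "card M = 0 \<or> card M = 1 \<or> card M = length \<pi>"
        using block_is_interval[OF perm M] s unfolding simple_def by blast
      then show ?thesis using card_seteq[of "{..<length \<pi>}" M] is_block_subset[OF M] by auto
    qed simp
  qed
next
  assume s: "simple_on (nth \<pi>) {..<length \<pi>}"
  show "simple \<pi>"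
    unfolding simple_def
  proof (intro allI impI)
    fix I assume "is_interval \<pi> I"
    then have "card I \<le> 1 \<or> I = {..<length \<pi>}"
      using simple_onD[OF s interval_is_block[OF perm]] by blast
    then show "card I = 0 \<or> card I = 1 \<or> card I = length \<pi>" by auto
  qed
qed

lemma contains_refl: "contains \<pi> \<pi>"
  unfolding contains_def by (intro exI[of _ id]) (auto simp: strict_mono_on_def)

lemma contains_trans:
  assumes "contains \<pi> \<sigma>" "contains \<sigma> \<rho>" shows "contains \<pi> \<rho>"
proof -
  obtain f where f: "strict_mono_on {..<length \<sigma>} f" "\<forall>i<length \<sigma>. f i < length \<pi>"
    "\<forall>i<length \<sigma>. \<forall>j<length \<sigma>. \<sigma>!i < \<sigma>!j \<longleftrightarrow> \<pi>!(f i) < \<pi>!(f j)"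
    using assms(1) unfolding contains_def by blast
  obtain g where g: "strict_mono_on {..<length \<rho>} g" "\<forall>i<length \<rho>. g i < length \<sigma>"
    "\<forall>i<length \<rho>. \<forall>j<length \<rho>. \<rho>!i < \<rho>!j \<longleftrightarrow> \<sigma>!(g i) < \<sigma>!(g j)"
    using assms(2) unfolding contains_def by blast
  show ?thesis unfolding contains_def
  proof (intro exI[of _ "f \<circ> g"] conjI allI impI)
    show "strict_mono_on {..<length \<rho>} (f \<circ> g)"
      using f(1) g(1,2) unfolding strict_mono_on_def by auto
  qed (use f g in auto)
qed

lemma contains_singleton: "\<pi> \<noteq> [] \<Longrightarrow> contains \<pi> [0]"
  unfolding contains_def by (intro exI[of _ "\<lambda>_. 0"]) (auto simp: strict_mono_on_def)

lemma is_perm_singleton: "is_perm [0]"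
  unfolding is_perm_def by auto

definition pattern :: "nat list \<Rightarrow> nat list \<Rightarrow> nat list" where
  "pattern \<beta> ps = map (\<lambda>q. card {l \<in> set ps. \<beta>!l < \<beta>!q}) ps"

lemma length_pattern [simp]: "length (pattern \<beta> ps) = length ps"
  unfolding pattern_def by simp

lemma nth_pattern: "i < length ps \<Longrightarrow> pattern \<beta> ps ! i = card {l \<in> set ps. \<beta>!l < \<beta>!(ps!i)}"
  unfolding pattern_def by simp

lemma rank_less:
  assumes "finite T" "q \<in> T" "q' \<in> T" "v q < (v q' :: nat)"
  shows "card {l\<in>T. v l < v q} < card {l\<in>T. v l < v q'}"
  using assms by (intro psubset_card_mono) auto

lemma rank_bound:
  assumes "finite T" "q \<in> T"
  shows "card {l\<in>T. v l < (v q :: nat)} < card T"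
  using assms by (intro psubset_card_mono) auto

lemma sorted_strict_mono: "sorted_wrt (<) ps \<Longrightarrow> strict_mono_on {..<length ps} (nth ps)"
  for ps :: "nat list"
  unfolding strict_mono_on_def using sorted_wrt_nth_less by fastforce

lemma pattern_less_iff:
  assumes perm: "is_perm \<beta>" and bd: "\<forall>q\<in>set ps. q < length \<beta>"
    and ij: "i < length ps" "j < length ps"
  shows "pattern \<beta> ps ! i < pattern \<beta> ps ! j \<longleftrightarrow> \<beta>!(ps!i) < \<beta>!(ps!j)"
proof -
  have q: "ps!i \<in> set ps" "ps!j \<in> set ps" using ij by auto
  have "\<beta>!(ps!i) < \<beta>!(ps!j) \<or> \<beta>!(ps!j) < \<beta>!(ps!i) \<or> \<beta>!(ps!i) = \<beta>!(ps!j)" by auto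
  then show ?thesis
    using rank_less[of "set ps" "ps!i" "ps!j" "nth \<beta>"] rank_less[of "set ps" "ps!j" "ps!i" "nth \<beta>"]
      q nth_pattern[OF ij(1), of \<beta>] nth_pattern[OF ij(2), of \<beta>] by auto
qed

lemma pattern_is_perm:
  assumes perm: "is_perm \<beta>" and sw: "sorted_wrt (<) ps" and bd: "\<forall>q\<in>set ps. q < length \<beta>"
  shows "is_perm (pattern \<beta> ps)"
proof -
  let ?r = "\<lambda>q. card {l \<in> set ps. \<beta>!l < \<beta>!q}"
  have dps: "distinct ps" using sw strict_sorted_iff by blast
  have inj: "inj_on (nth \<beta>) (set ps)" by (intro inj_on_subset[OF perm_inj[OF perm]]) (use bd in auto)
  have injr: "inj_on ?r (set ps)"
  proof (rule inj_onI)
    fix q q' assume qq: "q \<in> set ps" "q' \<in> set ps" "?r q = ?r q'"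
    then have "\<not> \<beta>!q < \<beta>!q'" "\<not> \<beta>!q' < \<beta>!q"
      using rank_less[of "set ps" q q' "nth \<beta>"] rank_less[of "set ps" q' q "nth \<beta>"] by auto
    then show "q = q'" using inj_onD[OF inj _ qq(1,2)] by simp
  qed
  have img: "?r ` set ps = {0..<length ps}"
  proof (rule card_seteq)
    show "?r ` set ps \<subseteq> {0..<length ps}"
      using rank_bound[of "set ps" _ "nth \<beta>"] distinct_card[OF dps] by auto
    show "card {0..<length ps} \<le> card (?r ` set ps)"
      using card_image[OF injr] distinct_card[OF dps] by simp
  qed simp
  show ?thesis unfolding is_perm_def pattern_def
    using dps injr img by (simp add: distinct_map)
qed

lemma contains_pattern:
  assumes perm: "is_perm \<beta>" and sw: "sorted_wrt (<) ps" and bd: "\<forall>q\<in>set ps. q < length \<beta>"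
  shows "contains \<beta> (pattern \<beta> ps)"
  unfolding contains_def
  using sorted_strict_mono[OF sw] bd pattern_less_iff[OF perm bd]
  by (intro exI[of _ "nth ps"]) auto

lemma pattern_block_image:
  assumes perm: "is_perm \<beta>" and sw: "sorted_wrt (<) ps" and bd: "\<forall>q\<in>set ps. q < length \<beta>"
    and M: "is_block (nth (pattern \<beta> ps)) {..<length ps} M"
  shows "is_block (nth \<beta>) (set ps) (nth ps ` M)"
proof (rule is_blockI)
  let ?t = "pattern \<beta> ps"
  have Ms: "M \<subseteq> {..<length ps}" using is_block_subset[OF M] .
  then show "nth ps ` M \<subseteq> set ps" by auto
  fix z assume z: "z \<in> set ps" "z \<notin> nth ps ` M"
  then obtain k where k: "k < length ps" "ps!k = z" "k \<notin> M" by (auto simp: in_set_conv_nth)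
  show "\<not> separates (nth \<beta>) z (nth ps ` M)"
  proof
    assume "separates (nth \<beta>) z (nth ps ` M)"
    then obtain i j where ij: "i \<in> M" "j \<in> M"
      "(ps!i < z \<and> z < ps!j) \<or> (\<beta>!(ps!i) < \<beta>!z \<and> \<beta>!z < \<beta>!(ps!j))"
      unfolding separates_def by auto
    have "i < length ps" "j < length ps" using ij Ms by auto
    then have "(i < k \<and> k < j) \<or> (?t!i < ?t!k \<and> ?t!k < ?t!j)"
      using ij(3) k strict_mono_on_less[OF sorted_strict_mono[OF sw]]
        pattern_less_iff[OF perm bd] by auto
    then have "separates (nth ?t) k M" using ij unfolding separates_def by auto
    then show False using is_blockD[OF M] k by auto
  qed
qed

lemma pattern_simple:
  assumes perm: "is_perm \<beta>" and sw: "sorted_wrt (<) ps" and bd: "\<forall>q\<in>set ps. q < length \<beta>"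
    and simple_ps: "simple_on (nth \<beta>) (set ps)"
  shows "simple (pattern \<beta> ps)"
  unfolding simple_iff_simple_on[OF pattern_is_perm[OF perm sw bd]] simple_on_def length_pattern
proof (intro allI impI)
  fix M assume M: "is_block (nth (pattern \<beta> ps)) {..<length ps} M"
  have Ms: "M \<subseteq> {..<length ps}" using is_block_subset[OF M] .
  have injps: "inj_on (nth ps) {..<length ps}"
    using strict_mono_on_imp_inj_on[OF sorted_strict_mono[OF sw]] .
  have "card (nth ps ` M) \<le> 1 \<or> nth ps ` M = set ps"
    using simple_onD[OF simple_ps pattern_block_image[OF perm sw bd M]] .
  moreover have "card (nth ps ` M) = card M" using card_image inj_on_subset[OF injps Ms] by blast
  moreover have "set ps = nth ps ` {..<length ps}" by (auto simp: in_set_conv_nth)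
  ultimately show "card M \<le> 1 \<or> M = {..<length ps}"
    using inj_on_image_eq_iff[OF injps Ms] by auto
qed

(* A simple permutation of length n >= 3 contains a simple permutation of length
   between n - 2 and n - 1: for n >= 5 by Schmerl-Trotter, for n <= 4 take two entries. *)
lemma simple_perm_large_simple_pattern:
  assumes perm: "is_perm \<beta>" and simple: "simple \<beta>" and len: "length \<beta> \<ge> 3"
  obtains \<tau> where "is_perm \<tau>" "contains \<beta> \<tau>" "simple \<tau>"
    "length \<tau> < length \<beta>" "length \<beta> \<le> length \<tau> + 2"
proof -
  let ?n = "length \<beta>"
  obtain T where T: "T \<subseteq> {..<?n}" "T \<noteq> {..<?n}" "simple_on (nth \<beta>) T" "?n \<le> card T + 2"
  proof (cases "?n \<ge> 5")
    case True
    then show ?thesis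
      using schmerl_trotter[OF finite_lessThan perm_inj[OF perm]] simple_iff_simple_on[OF perm] simple that
      by auto
  next
    case False
    have "2 \<in> {..<?n}" "2 \<notin> {0::nat,1}" using len by auto
    then have "{0,1} \<noteq> {..<?n}" by blast
    then show ?thesis
      by (rule that[rotated]) (use simple_on_card_le2[of "{0,1}"] False len in auto)
  qed
  define ps where "ps = sorted_list_of_set T"
  have finT: "finite T" using T(1) finite_subset by blast
  then have sw: "sorted_wrt (<) ps" and setps: "set ps = T" and lenps: "length ps = card T"
    unfolding ps_def by auto
  have bd: "\<forall>q\<in>set ps. q < ?n" using T(1) setps by auto
  have "card T < ?n" using T(1,2) psubset_card_mono[of "{..<?n}" T] by auto
  then show ?thesis
    using that[OF pattern_is_perm[OF perm sw bd] contains_pattern[OF perm sw bd]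
        pattern_simple[OF perm sw bd]] T(3,4) setps lenps by auto
qed

section \<open>Simple patterns of inflations\<close>

definition block_shift :: "nat list \<Rightarrow> nat list list \<Rightarrow> nat \<Rightarrow> nat" where
  "block_shift \<sigma> \<alpha>s i =
     sum_list (map (\<lambda>l. length (\<alpha>s!l)) (filter (\<lambda>l. \<sigma>!l < \<sigma>!i) [0..<length \<sigma>]))"

definition inflation_blocks :: "nat list \<Rightarrow> nat list list \<Rightarrow> nat list list" where
  "inflation_blocks \<sigma> \<alpha>s = map (\<lambda>i. map (\<lambda>x. x + block_shift \<sigma> \<alpha>s i) (\<alpha>s!i)) [0..<length \<sigma>]"

definition block_start :: "nat list \<Rightarrow> nat list list \<Rightarrow> nat \<Rightarrow> nat" where
  "block_start \<sigma> \<alpha>s i = length (concat (take i (inflation_blocks \<sigma> \<alpha>s)))"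

lemma inflate_eq_concat_blocks: "inflate \<sigma> \<alpha>s = concat (inflation_blocks \<sigma> \<alpha>s)"
  unfolding inflate_def inflation_blocks_def block_shift_def by simp

lemma length_inflation_blocks [simp]: "length (inflation_blocks \<sigma> \<alpha>s) = length \<sigma>"
  unfolding inflation_blocks_def by simp

lemma block_shift_eq_sum:
  "block_shift \<sigma> \<alpha>s i = (\<Sum>l\<in>{l. l < length \<sigma> \<and> \<sigma>!l < \<sigma>!i}. length (\<alpha>s!l))"
proof -
  have "block_shift \<sigma> \<alpha>s i = (\<Sum>l\<in>set (filter (\<lambda>l. \<sigma>!l < \<sigma>!i) [0..<length \<sigma>]). length (\<alpha>s!l))"
    unfolding block_shift_def by (rule sum_list_distinct_conv_sum_set) simp
  also have "set (filter (\<lambda>l. \<sigma>!l < \<sigma>!i) [0..<length \<sigma>]) = {l. l < length \<sigma> \<and> \<sigma>!l < \<sigma>!i}"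
    by auto
  finally show ?thesis .
qed

lemma block_shift_less:
  assumes "i < length \<sigma>" "\<sigma>!i < \<sigma>!i'"
  shows "block_shift \<sigma> \<alpha>s i + length (\<alpha>s!i) \<le> block_shift \<sigma> \<alpha>s i'"
proof -
  let ?S = "{l. l < length \<sigma> \<and> \<sigma>!l < \<sigma>!i}"
  have "block_shift \<sigma> \<alpha>s i + length (\<alpha>s!i) = (\<Sum>l\<in>insert i ?S. length (\<alpha>s!l))"
    by (simp add: block_shift_eq_sum)
  also have "\<dots> \<le> (\<Sum>l\<in>{l. l < length \<sigma> \<and> \<sigma>!l < \<sigma>!i'}. length (\<alpha>s!l))"
    by (rule sum_mono2) (use assms in auto)
  finally show ?thesis by (simp add: block_shift_eq_sum)
qed

lemma block_start_Suc:
  "i < length \<sigma> \<Longrightarrow> block_start \<sigma> \<alpha>s (Suc i) = block_start \<sigma> \<alpha>s i + length (\<alpha>s!i)"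
  unfolding block_start_def by (simp add: take_Suc_conv_app_nth inflation_blocks_def)

lemma block_start_mono:
  assumes "i \<le> j" shows "block_start \<sigma> \<alpha>s i \<le> block_start \<sigma> \<alpha>s j"
proof -
  let ?xs = "inflation_blocks \<sigma> \<alpha>s"
  have "take j ?xs = take i ?xs @ take (j - i) (drop i ?xs)"
    using assms by (metis le_add_diff_inverse take_add)
  then show ?thesis unfolding block_start_def by simp
qed

lemma block_start_less:
  assumes "i < i'" "i' \<le> length \<sigma>"
  shows "block_start \<sigma> \<alpha>s i + length (\<alpha>s!i) \<le> block_start \<sigma> \<alpha>s i'"
  using block_start_Suc[of i \<sigma> \<alpha>s] block_start_mono[of "Suc i" i' \<sigma> \<alpha>s] assms by simp

lemma nth_concat_split:
  "p < length (concat xs) \<Longrightarrow> \<exists>i j. i < length xs \<and> j < length (xs!i) \<and>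
     p = length (concat (take i xs)) + j \<and> concat xs ! p = xs!i!j"
proof (induction xs arbitrary: p)
  case (Cons x xs)
  show ?case
  proof (cases "p < length x")
    case True
    then show ?thesis by (intro exI[of _ 0] exI[of _ p]) (auto simp: nth_append)
  next
    case False
    then have "p - length x < length (concat xs)" using Cons.prems by auto
    then obtain i j where "i < length xs" "j < length (xs!i)"
      "p - length x = length (concat (take i xs)) + j" "concat xs ! (p - length x) = xs!i!j"
      using Cons.IH by blast
    then show ?thesis using False by (intro exI[of _ "Suc i"] exI[of _ j]) (auto simp: nth_append)
  qed
qed simp

definition block_index :: "nat list \<Rightarrow> nat list list \<Rightarrow> nat \<Rightarrow> nat" where
  "block_index \<sigma> \<alpha>s q = (THE i. i < length \<sigma> \<and>
     block_start \<sigma> \<alpha>s i \<le> q \<and> q < block_start \<sigma> \<alpha>s i + length (\<alpha>s!i))"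

lemma block_index_unique:
  assumes "i < length \<sigma>" "block_start \<sigma> \<alpha>s i \<le> q" "q < block_start \<sigma> \<alpha>s i + length (\<alpha>s!i)"
    and "i' < length \<sigma>" "block_start \<sigma> \<alpha>s i' \<le> q" "q < block_start \<sigma> \<alpha>s i' + length (\<alpha>s!i')"
  shows "i = i'"
  using block_start_less[of i i' \<sigma> \<alpha>s] block_start_less[of i' i \<sigma> \<alpha>s] assms
  by (cases i i' rule: linorder_cases) auto

lemma block_index_spec:
  assumes "q < length (inflate \<sigma> \<alpha>s)"
  defines "i \<equiv> block_index \<sigma> \<alpha>s q"
  shows "i < length \<sigma>" "block_start \<sigma> \<alpha>s i \<le> q" "q < block_start \<sigma> \<alpha>s i + length (\<alpha>s!i)"
    and "inflate \<sigma> \<alpha>s ! q = \<alpha>s!i!(q - block_start \<sigma> \<alpha>s i) + block_shift \<sigma> \<alpha>s i"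
proof -
  obtain k j where kj: "k < length \<sigma>" "j < length (\<alpha>s!k)" "q = block_start \<sigma> \<alpha>s k + j"
    "inflate \<sigma> \<alpha>s ! q = \<alpha>s!k!j + block_shift \<sigma> \<alpha>s k"
    using nth_concat_split[of q "inflation_blocks \<sigma> \<alpha>s"] assms(1)
    by (auto simp: inflate_eq_concat_blocks block_start_def inflation_blocks_def)
  have "i = k" unfolding i_def block_index_def
    by (rule the_equality) (use kj block_index_unique[of k \<sigma> \<alpha>s q] in auto)
  then show "i < length \<sigma>" "block_start \<sigma> \<alpha>s i \<le> q" "q < block_start \<sigma> \<alpha>s i + length (\<alpha>s!i)"
    "inflate \<sigma> \<alpha>s ! q = \<alpha>s!i!(q - block_start \<sigma> \<alpha>s i) + block_shift \<sigma> \<alpha>s i"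
    using kj by auto
qed

lemma block_index_mono:
  assumes "q < q'" "q' < length (inflate \<sigma> \<alpha>s)"
  shows "block_index \<sigma> \<alpha>s q \<le> block_index \<sigma> \<alpha>s q'"
proof (rule ccontr)
  let ?i = "block_index \<sigma> \<alpha>s q" and ?i' = "block_index \<sigma> \<alpha>s q'"
  assume "\<not> ?thesis"
  moreover have q: "q < length (inflate \<sigma> \<alpha>s)" using assms by simp
  ultimately have "block_start \<sigma> \<alpha>s ?i' + length (\<alpha>s!?i') \<le> block_start \<sigma> \<alpha>s ?i"
    using block_start_less[of ?i' ?i \<sigma> \<alpha>s] block_index_spec(1)[OF q] by simp
  then show False using block_index_spec(2)[OF q] block_index_spec(3)[OF assms(2)] assms(1) by simp
qed

lemma inflate_less_across_blocks:
  assumes \<sigma>: "is_perm \<sigma>" and len: "length \<alpha>s = length \<sigma>" and \<alpha>s: "\<forall>\<alpha>\<in>set \<alpha>s. is_perm \<alpha>"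
    and q: "q < length (inflate \<sigma> \<alpha>s)" "q' < length (inflate \<sigma> \<alpha>s)"
    and ne: "block_index \<sigma> \<alpha>s q \<noteq> block_index \<sigma> \<alpha>s q'"
  shows "inflate \<sigma> \<alpha>s ! q < inflate \<sigma> \<alpha>s ! q' \<longleftrightarrow>
    \<sigma>!(block_index \<sigma> \<alpha>s q) < \<sigma>!(block_index \<sigma> \<alpha>s q')"
proof -
  have value_bound: "inflate \<sigma> \<alpha>s ! x < block_shift \<sigma> \<alpha>s (block_index \<sigma> \<alpha>s x) + length (\<alpha>s!(block_index \<sigma> \<alpha>s x))"
    if x: "x < length (inflate \<sigma> \<alpha>s)" for x
  proof -
    let ?i = "block_index \<sigma> \<alpha>s x"
    have "\<alpha>s!?i \<in> set \<alpha>s" using block_index_spec(1)[OF x] len by simp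
    then show ?thesis using perm_nth_lt \<alpha>s block_index_spec[OF x] by fastforce
  qed
  let ?i = "block_index \<sigma> \<alpha>s q" and ?i' = "block_index \<sigma> \<alpha>s q'"
  have "\<sigma>!?i \<noteq> \<sigma>!?i'"
    using inj_on_contraD[OF perm_inj[OF \<sigma>] ne] block_index_spec(1)[OF q(1)] block_index_spec(1)[OF q(2)] by auto
  then consider "\<sigma>!?i < \<sigma>!?i'" | "\<sigma>!?i' < \<sigma>!?i" by linarith
  then show ?thesis
  proof cases
    case 1
    then show ?thesis using block_shift_less[OF block_index_spec(1)[OF q(1)] 1, of \<alpha>s]
        value_bound[OF q(1)] block_index_spec(4)[OF q(2)] by simp
  next
    case 2
    then show ?thesis using block_shift_less[OF block_index_spec(1)[OF q(2)] 2, of \<alpha>s]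
        value_bound[OF q(2)] block_index_spec(4)[OF q(1)] by simp
  qed
qed

lemma embedding_fibre_is_block:
  assumes \<sigma>: "is_perm \<sigma>" and len: "length \<alpha>s = length \<sigma>" and \<alpha>s: "\<forall>\<alpha>\<in>set \<alpha>s. is_perm \<alpha>"
    and f: "strict_mono_on {..<length \<tau>} f" "\<forall>k<length \<tau>. f k < length (inflate \<sigma> \<alpha>s)"
      "\<forall>k<length \<tau>. \<forall>k'<length \<tau>. \<tau>!k < \<tau>!k' \<longleftrightarrow> inflate \<sigma> \<alpha>s ! (f k) < inflate \<sigma> \<alpha>s ! (f k')"
  shows "is_block (nth \<tau>) {..<length \<tau>} {k. k < length \<tau> \<and> block_index \<sigma> \<alpha>s (f k) = i}"
proof (rule is_blockI)
  let ?B = "\<lambda>k. block_index \<sigma> \<alpha>s (f k)"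
  fix z assume z: "z \<in> {..<length \<tau>}" "z \<notin> {k. k < length \<tau> \<and> ?B k = i}"
  show "\<not> separates (nth \<tau>) z {k. k < length \<tau> \<and> ?B k = i}"
  proof
    assume "separates (nth \<tau>) z {k. k < length \<tau> \<and> ?B k = i}"
    then obtain x y where xy: "x < length \<tau>" "?B x = i" "y < length \<tau>" "?B y = i"
      "(x < z \<and> z < y) \<or> (\<tau>!x < \<tau>!z \<and> \<tau>!z < \<tau>!y)" unfolding separates_def by auto
    have Bz: "?B z \<noteq> i" using z by auto
    from xy(5) show False
    proof
      assume "x < z \<and> z < y"
      then have "f x < f z" "f z < f y" using strict_mono_onD[OF f(1)] xy z by auto
      then show False using block_index_mono f(2) xy z Bz by (metis le_antisym lessThan_iff)
    next
      assume "\<tau>!x < \<tau>!z \<and> \<tau>!z < \<tau>!y"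
      then have "\<sigma>!i < \<sigma>!(?B z)" "\<sigma>!(?B z) < \<sigma>!i"
        using inflate_less_across_blocks[OF \<sigma> len \<alpha>s] f(2,3) xy z Bz by auto
      then show False by simp
    qed
  qed
qed auto

lemma contained_in_one_block:
  assumes f: "strict_mono_on {..<length \<tau>} f" "\<forall>k<length \<tau>. f k < length (inflate \<sigma> \<alpha>s)"
      "\<forall>k<length \<tau>. \<forall>k'<length \<tau>. \<tau>!k < \<tau>!k' \<longleftrightarrow> inflate \<sigma> \<alpha>s ! (f k) < inflate \<sigma> \<alpha>s ! (f k')"
    and one: "\<forall>k<length \<tau>. block_index \<sigma> \<alpha>s (f k) = i"
  shows "contains (\<alpha>s!i) \<tau>"
proof -
  let ?s = "block_start \<sigma> \<alpha>s i"
  have pos: "?s \<le> f k" "f k - ?s < length (\<alpha>s!i)"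
    "inflate \<sigma> \<alpha>s ! f k = \<alpha>s!i!(f k - ?s) + block_shift \<sigma> \<alpha>s i" if k: "k < length \<tau>" for k
    using block_index_spec[OF f(2)[rule_format, OF k]] one[rule_format, OF k] by simp_all
  show ?thesis unfolding contains_def
  proof (intro exI[of _ "\<lambda>k. f k - ?s"] conjI allI impI)
    show "strict_mono_on {..<length \<tau>} (\<lambda>k. f k - ?s)"
    proof (rule strict_mono_onI)
      fix k k' assume "k \<in> {..<length \<tau>}" "k' \<in> {..<length \<tau>}" "k < k'"
      then have "f k < f k'" "?s \<le> f k" using strict_mono_onD[OF f(1)] pos(1) by auto
      then show "f k - ?s < f k' - ?s" by (simp add: diff_less_mono)
    qed
  next
    fix k assume "k < length \<tau>" then show "f k - ?s < length (\<alpha>s!i)" by (rule pos(2))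
  next
    fix k k' assume "k < length \<tau>" "k' < length \<tau>"
    then show "\<tau>!k < \<tau>!k' \<longleftrightarrow> \<alpha>s!i!(f k - ?s) < \<alpha>s!i!(f k' - ?s)" using f(3) pos(3) by simp
  qed
qed

lemma contained_in_skeleton:
  assumes \<sigma>: "is_perm \<sigma>" and len: "length \<alpha>s = length \<sigma>" and \<alpha>s: "\<forall>\<alpha>\<in>set \<alpha>s. is_perm \<alpha>"
    and f: "strict_mono_on {..<length \<tau>} f" "\<forall>k<length \<tau>. f k < length (inflate \<sigma> \<alpha>s)"
      "\<forall>k<length \<tau>. \<forall>k'<length \<tau>. \<tau>!k < \<tau>!k' \<longleftrightarrow> inflate \<sigma> \<alpha>s ! (f k) < inflate \<sigma> \<alpha>s ! (f k')"
    and inj: "\<forall>k<length \<tau>. \<forall>k'<length \<tau>. block_index \<sigma> \<alpha>s (f k) = block_index \<sigma> \<alpha>s (f k') \<longrightarrow> k = k'"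
  shows "contains \<sigma> \<tau>"
  unfolding contains_def
proof (intro exI[of _ "\<lambda>k. block_index \<sigma> \<alpha>s (f k)"] conjI allI impI)
  show "strict_mono_on {..<length \<tau>} (\<lambda>k. block_index \<sigma> \<alpha>s (f k))"
  proof (rule strict_mono_onI)
    fix k k' assume k: "k \<in> {..<length \<tau>}" "k' \<in> {..<length \<tau>}" "k < k'"
    then have "block_index \<sigma> \<alpha>s (f k) \<le> block_index \<sigma> \<alpha>s (f k')"
      using block_index_mono strict_mono_onD[OF f(1)] f(2) by simp
    moreover have "block_index \<sigma> \<alpha>s (f k) \<noteq> block_index \<sigma> \<alpha>s (f k')"
      using inj k(1,2) \<open>k < k'\<close> by (metis lessThan_iff less_irrefl)
    ultimately show "block_index \<sigma> \<alpha>s (f k) < block_index \<sigma> \<alpha>s (f k')" by simp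
  qed
next
  fix k assume "k < length \<tau>"
  then show "block_index \<sigma> \<alpha>s (f k) < length \<sigma>" using block_index_spec(1) f(2) by blast
next
  fix k k' assume k: "k < length \<tau>" "k' < length \<tau>"
  show "\<tau>!k < \<tau>!k' \<longleftrightarrow> \<sigma>!(block_index \<sigma> \<alpha>s (f k)) < \<sigma>!(block_index \<sigma> \<alpha>s (f k'))"
  proof (cases "k = k'")
    case False
    then have "block_index \<sigma> \<alpha>s (f k) \<noteq> block_index \<sigma> \<alpha>s (f k')" using inj k by blast
    then show ?thesis
      using inflate_less_across_blocks[OF \<sigma> len \<alpha>s] f(2,3) k by simp
  qed simp
qed

(* A simple permutation contained in sigma[alphas] is contained in sigma or in one of
   the alphas: the fibres of an occurrence are blocks of tau, so either one fibre is
   everything or all fibres are singletons. *)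
theorem simple_pattern_of_inflation:
  assumes \<sigma>: "is_perm \<sigma>" and len: "length \<alpha>s = length \<sigma>" and \<alpha>s: "\<forall>\<alpha>\<in>set \<alpha>s. is_perm \<alpha>"
    and \<tau>: "is_perm \<tau>" "simple \<tau>" and contained: "contains (inflate \<sigma> \<alpha>s) \<tau>"
  shows "contains \<sigma> \<tau> \<or> (\<exists>\<alpha>\<in>set \<alpha>s. contains \<alpha> \<tau>)"
proof -
  let ?n = "length \<tau>"
  obtain f where f: "strict_mono_on {..<?n} f" "\<forall>k<?n. f k < length (inflate \<sigma> \<alpha>s)"
    "\<forall>k<?n. \<forall>k'<?n. \<tau>!k < \<tau>!k' \<longleftrightarrow> inflate \<sigma> \<alpha>s ! (f k) < inflate \<sigma> \<alpha>s ! (f k')"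
    using contained unfolding contains_def by blast
  let ?B = "\<lambda>k. block_index \<sigma> \<alpha>s (f k)"
  show ?thesis
  proof (cases "\<exists>k0<?n. \<forall>k<?n. ?B k = ?B k0")
    case True
    then obtain k0 where k0: "k0 < ?n" "\<forall>k<?n. ?B k = ?B k0" by blast
    have "contains (\<alpha>s ! ?B k0) \<tau>" using contained_in_one_block[OF f k0(2)] .
    moreover have "\<alpha>s ! ?B k0 \<in> set \<alpha>s" using block_index_spec(1) f(2) k0(1) len by simp
    ultimately show ?thesis by blast
  next
    case False
    have "\<forall>k<?n. \<forall>k'<?n. ?B k = ?B k' \<longrightarrow> k = k'"
    proof (intro allI impI)
      fix k k' assume k: "k < ?n" "k' < ?n" "?B k = ?B k'"
      let ?F = "{j. j < ?n \<and> ?B j = ?B k}"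
      have "?F \<noteq> {..<?n}"
      proof
        assume eq: "?F = {..<?n}"
        have "?B j = ?B k" if "j < ?n" for j
        proof -
          have "j \<in> ?F" using that unfolding eq by simp
          then show ?thesis by simp
        qed
        then show False using False k(1) by blast
      qed
      then have "card ?F \<le> 1"
        using simple_onD[OF \<tau>(2)[unfolded simple_iff_simple_on[OF \<tau>(1)]]
            embedding_fibre_is_block[OF \<sigma> len \<alpha>s f, of "?B k"]] by blast
      moreover have "finite ?F" by simp
      ultimately have "\<forall>x\<in>?F. \<forall>y\<in>?F. x = y" using card_le_Suc0_iff_eq[of ?F] by simp
      then show "k = k'" using k by simp
    qed
    then show ?thesis using contained_in_skeleton[OF \<sigma> len \<alpha>s f] by blast
  qed
qed

section \<open>Non-simple permutations are proper inflations\<close>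

(* An interval [a,b) of beta with values [c, c + (b-a)) exhibits beta as the inflation of
   the skeleton (the pattern at the positions outside the interval, plus a) by the
   pattern of the interval at index a and by singletons elsewhere. *)
definition interval_args :: "nat list \<Rightarrow> nat \<Rightarrow> nat \<Rightarrow> nat list list" where
  "interval_args \<beta> a b = map (\<lambda>i. if i = a then pattern \<beta> [a..<b] else [0]) [0..<Suc a + (length \<beta> - b)]"

context
  fixes \<beta> :: "nat list" and a b c :: nat
  assumes perm: "is_perm \<beta>" and ab: "a < b" "b \<le> length \<beta>"
    and img: "nth \<beta> ` {a..<b} = {c..<c + (b - a)}"
begin

abbreviation outside_positions :: "nat list" where "outside_positions \<equiv> [0..<Suc a] @ [b..<length \<beta>]"
abbreviation skeleton_length :: nat where "skeleton_length \<equiv> Suc a + (length \<beta> - b)"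
abbreviation skeleton :: "nat list" where "skeleton \<equiv> pattern \<beta> outside_positions"
abbreviation interval_pattern :: "nat list" where "interval_pattern \<equiv> pattern \<beta> [a..<b]"
abbreviation skeleton_args :: "nat list list" where "skeleton_args \<equiv> interval_args \<beta> a b"

lemma outside_positions_facts:
  shows "length outside_positions = skeleton_length" "set outside_positions = {0..<Suc a} \<union> {b..<length \<beta>}"
    and "sorted_wrt (<) outside_positions" "\<forall>q\<in>set outside_positions. q < length \<beta>"
    and "\<And>i. i < skeleton_length \<Longrightarrow> outside_positions!i = (if i \<le> a then i else b + i - Suc a)"
  using ab by (auto simp: sorted_wrt_append nth_append)

lemma skeleton_args_nth: "l < skeleton_length \<Longrightarrow> skeleton_args!l = (if l = a then interval_pattern else [0])"
  unfolding interval_args_def by (simp only: nth_map length_upt nth_upt diff_zero add_0)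

lemma length_skeleton_args_nth:
  assumes "l < skeleton_length" shows "length (skeleton_args!l) = (if l = a then b - a else 1)"
  using skeleton_args_nth[OF assms] by simp

lemma skeleton_is_perm: "is_perm skeleton"
  using pattern_is_perm[OF perm] outside_positions_facts by blast

lemma interval_value_inside: "q \<in> {a..<b} \<Longrightarrow> \<beta>!q \<in> {c..<c + (b - a)}"
  using img by blast

lemma interval_value_outside:
  assumes "q < length \<beta>" "q \<notin> {a..<b}" shows "\<beta>!q \<notin> {c..<c + (b - a)}"
proof
  assume "\<beta>!q \<in> {c..<c + (b - a)}"
  then obtain w where "w \<in> {a..<b}" "\<beta>!w = \<beta>!q" using img by (metis imageE)
  then show False using inj_onD[OF perm_inj[OF perm]] assms ab by fastforce
qed

(* In the skeleton inflation, block i is shifted by its own value plus, above the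
   interval, the b - a - 1 extra entries of the inflated block. *)
lemma skeleton_shift_formula:
  assumes i: "i < skeleton_length"
  shows "block_shift skeleton skeleton_args i = skeleton!i + (if skeleton!a < skeleton!i then b - a - 1 else 0)"
proof -
  let ?L = "{l. l < skeleton_length \<and> skeleton!l < skeleton!i}"
  have "block_shift skeleton skeleton_args i = (\<Sum>l\<in>?L. length (skeleton_args!l))"
    using block_shift_eq_sum[of skeleton skeleton_args i] outside_positions_facts(1) by simp
  also have "\<dots> = (\<Sum>l\<in>?L. 1 + (if l = a then b - a - 1 else 0))"
    by (rule sum.cong) (use ab length_skeleton_args_nth in auto)
  also have "\<dots> = (\<Sum>l\<in>?L. 1) + (\<Sum>l\<in>?L. if l = a then b - a - 1 else 0)"
    by (rule sum.distrib)
  also have "\<dots> = card ?L + (if a \<in> ?L then b - a - 1 else 0)"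
    using sum.delta[of ?L a "\<lambda>_. b - a - 1"] by simp
  also have "card ?L = skeleton!i"
    using perm_rank[OF skeleton_is_perm, of i] i outside_positions_facts(1) by simp
  also have "(a \<in> ?L) = (skeleton!a < skeleton!i)" by simp
  finally show ?thesis .
qed

lemma interval_values_compare:
  assumes "v \<notin> {c..<c + (b - a)}" "w \<in> {c..<c + (b - a)}" "w' \<in> {c..<c + (b - a)}"
  shows "w < v \<longleftrightarrow> w' < v" "v < w \<longleftrightarrow> v < w'"
  using assms by auto

lemma skeleton_shift_outside:
  assumes i: "i < skeleton_length" "i \<noteq> a"
  shows "block_shift skeleton skeleton_args i = \<beta>!(outside_positions!i)"
proof -
  define x where "x = outside_positions!i"
  have x: "x < length \<beta>" "x \<notin> {a..<b}" using outside_positions_facts(4,5) i ab unfolding x_def by auto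
  have "{q\<in>{Suc a..<b}. \<beta>!q < \<beta>!x} = (if \<beta>!a < \<beta>!x then {Suc a..<b} else {})"
    using interval_values_compare(1)[OF interval_value_outside[OF x] interval_value_inside interval_value_inside, of a] ab by auto
  then have inside_below: "card {q\<in>{Suc a..<b}. \<beta>!q < \<beta>!x} = (if \<beta>!a < \<beta>!x then b - a - 1 else 0)"
    by simp
  let ?A = "{q\<in>set outside_positions. \<beta>!q < \<beta>!x}" and ?B = "{q\<in>{Suc a..<b}. \<beta>!q < \<beta>!x}"
  have "{q. q < length \<beta> \<and> \<beta>!q < \<beta>!x} = ?A \<union> ?B"
    using ab outside_positions_facts(2) by auto
  moreover have "card (?A \<union> ?B) = card ?A + card ?B"
    by (rule card_Un_disjoint) (use outside_positions_facts(2) in auto)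
  ultimately have "\<beta>!x = card ?A + card ?B" using perm_rank[OF perm x(1)] by simp
  moreover have "skeleton!i = card {q\<in>set outside_positions. \<beta>!q < \<beta>!x}"
    using nth_pattern i outside_positions_facts(1) unfolding x_def by simp
  moreover have "(skeleton!a < skeleton!i) = (\<beta>!a < \<beta>!x)"
    using pattern_less_iff[OF perm outside_positions_facts(4), of a i] i outside_positions_facts(1,5) unfolding x_def by simp
  ultimately show ?thesis using skeleton_shift_formula[OF i(1)] inside_below unfolding x_def by simp
qed

lemma skeleton_shift_inside:
  assumes j: "j < b - a"
  shows "interval_pattern!j + block_shift skeleton skeleton_args a = \<beta>!(a + j)"
proof -
  let ?y = "a + j"
  have y: "?y \<in> {a..<b}" "?y < length \<beta>" using j ab by auto
  let ?A = "{q\<in>{a..<b}. \<beta>!q < \<beta>!?y}" and ?B = "{q\<in>set outside_positions - {a}. \<beta>!q < \<beta>!?y}"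
  have "{q. q < length \<beta> \<and> \<beta>!q < \<beta>!?y} = ?A \<union> ?B"
    using ab outside_positions_facts(2) by auto
  moreover have "card (?A \<union> ?B) = card ?A + card ?B"
    by (rule card_Un_disjoint) (use outside_positions_facts(2) in auto)
  ultimately have "\<beta>!?y = card ?A + card ?B" using perm_rank[OF perm y(2)] by simp
  moreover have "?B = {q\<in>set outside_positions. \<beta>!q < \<beta>!a}"
  proof -
    have "\<beta>!q < \<beta>!?y \<longleftrightarrow> \<beta>!q < \<beta>!a" if "q \<in> set outside_positions - {a}" for q
    proof -
      have "q \<in> {0..<Suc a} \<union> {b..<length \<beta>}" "q \<noteq> a"
        using that unfolding outside_positions_facts(2) by blast+
      then have "q < length \<beta>" "q \<notin> {a..<b}" using ab by auto
      moreover have "a \<in> {a..<b}" using ab by simp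
      ultimately show ?thesis
        using interval_values_compare(2)[OF interval_value_outside interval_value_inside[OF y(1)] interval_value_inside] by blast
    qed
    then show ?thesis by auto
  qed
  moreover have "interval_pattern!j = card ?A" using nth_pattern[of j "[a..<b]" \<beta>] j by simp
  moreover have "block_shift skeleton skeleton_args a = card {q\<in>set outside_positions. \<beta>!q < \<beta>!a}"
    using skeleton_shift_formula[of a] nth_pattern[of a outside_positions \<beta>] outside_positions_facts(1,5) by simp
  ultimately show ?thesis by simp
qed

(* Keep the index list of skeleton_args folded during the list computation. *)
declare upt_Suc [simp del]

lemma inflate_skeleton_args:
  "inflate skeleton skeleton_args = map (block_shift skeleton skeleton_args) [0..<a] @ map (\<lambda>x. x + block_shift skeleton skeleton_args a) interval_pattern
     @ map (block_shift skeleton skeleton_args) [Suc a..<skeleton_length]"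
proof -
  let ?g = "\<lambda>i. map (\<lambda>x. x + block_shift skeleton skeleton_args i) (skeleton_args!i)"
  have "a < skeleton_length" by simp
  then have upt: "[0..<skeleton_length] = [0..<a] @ a # [Suc a..<skeleton_length]"
    by (metis upt_add_eq_append upt_conv_Cons le0 le_add_diff_inverse less_imp_le_nat)
  have singles: "map ?g xs = map (\<lambda>i. [block_shift skeleton skeleton_args i]) xs"
    if "\<forall>i\<in>set xs. i < skeleton_length \<and> i \<noteq> a" for xs
    using that skeleton_args_nth by (intro map_cong) auto
  have "inflation_blocks skeleton skeleton_args = map ?g ([0..<a] @ a # [Suc a..<skeleton_length])"
    unfolding inflation_blocks_def length_pattern outside_positions_facts(1) upt ..
  also have "\<dots> = map (\<lambda>i. [block_shift skeleton skeleton_args i]) [0..<a] @ ?g a # map (\<lambda>i. [block_shift skeleton skeleton_args i]) [Suc a..<skeleton_length]"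
    using singles[of "[0..<a]"] singles[of "[Suc a..<skeleton_length]"] by simp
  finally show ?thesis unfolding inflate_eq_concat_blocks using skeleton_args_nth[of a] by simp
qed

lemma inflate_skeleton_eq: "inflate skeleton skeleton_args = \<beta>"
proof (rule nth_equalityI)
  have "a + (b - a) + (skeleton_length - Suc a) = length \<beta>" using ab by arith
  then show "length (inflate skeleton skeleton_args) = length \<beta>"
    unfolding inflate_skeleton_args by simp
  fix k assume "k < length (inflate skeleton skeleton_args)"
  then have k: "k < length \<beta>" using \<open>length (inflate skeleton skeleton_args) = length \<beta>\<close> by simp
  consider "k < a" | "a \<le> k" "k < b" | "b \<le> k" by linarith
  then show "inflate skeleton skeleton_args ! k = \<beta> ! k"
  proof cases
    case 1
    then show ?thesis
      using skeleton_shift_outside[of k] outside_positions_facts(5)[of k] unfolding inflate_skeleton_args by (simp add: nth_append)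
  next
    case 2
    then have "k - a < b - a" by arith
    then show ?thesis
      using 2 skeleton_shift_inside[of "k - a"] unfolding inflate_skeleton_args by (simp add: nth_append)
  next
    case 3
    let ?i = "Suc a + (k - b)"
    have i: "?i < skeleton_length" "?i \<noteq> a" "outside_positions ! ?i = k" using 3 k ab outside_positions_facts(5)[of ?i] by auto
    have "\<not> k - a < b - a" "k - a - (b - a) = k - b" "Suc a + (k - b) < skeleton_length" using 3 k ab by arith+
    then have "inflate skeleton skeleton_args ! k = block_shift skeleton skeleton_args ?i"
      using 3 ab unfolding inflate_skeleton_args by (simp add: nth_append)
    then show ?thesis using skeleton_shift_outside[OF i(1,2)] i(3) by simp
  qed
qed

end

lemma nonsimple_is_proper_inflation:
  assumes perm: "is_perm \<beta>" and nonsimple: "\<not> simple \<beta>"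
  obtains \<sigma> \<alpha>s where "inflate \<sigma> \<alpha>s = \<beta>" "length \<alpha>s = length \<sigma>"
    "is_perm \<sigma>" "contains \<beta> \<sigma>" "\<sigma> \<noteq> \<beta>"
    "\<forall>\<alpha>\<in>set \<alpha>s. is_perm \<alpha> \<and> contains \<beta> \<alpha> \<and> \<alpha> \<noteq> \<beta> \<and> \<alpha> \<noteq> []"
proof -
  obtain I where I: "is_interval \<beta> I" "card I \<noteq> 0" "card I \<noteq> 1" "card I \<noteq> length \<beta>"
    using nonsimple unfolding simple_def by blast
  then obtain a b c where abc: "I = {a..<b}" "b \<le> length \<beta>" "nth \<beta> ` I = {c..<c + card I}"
    unfolding is_interval_def by blast
  have ab: "a < b" "2 \<le> b - a" "b - a < length \<beta>" using I abc by auto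
  have img: "nth \<beta> ` {a..<b} = {c..<c + (b - a)}" using abc by simp
  let ?outer = "[0..<Suc a] @ [b..<length \<beta>]"
  have outer: "sorted_wrt (<) ?outer" "\<forall>q\<in>set ?outer. q < length \<beta>"
    and inner: "sorted_wrt (<) [a..<b]" "\<forall>q\<in>set [a..<b]. q < length \<beta>"
    using ab abc(2) by (auto simp: sorted_wrt_append)
  let ?\<sigma> = "pattern \<beta> ?outer" and ?\<alpha> = "pattern \<beta> [a..<b]" and ?\<alpha>s = "interval_args \<beta> a b"
  have "length ?\<sigma> < length \<beta>" using ab abc(2) by simp
  then have \<sigma>: "is_perm ?\<sigma>" "contains \<beta> ?\<sigma>" "?\<sigma> \<noteq> \<beta>"
    using pattern_is_perm[OF perm outer] contains_pattern[OF perm outer] by (metis less_irrefl)+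
  have "length ?\<alpha> = b - a" by simp
  then have "?\<alpha> \<noteq> \<beta>" "?\<alpha> \<noteq> []" using ab by (metis less_irrefl, force)
  then have \<alpha>: "is_perm ?\<alpha>" "contains \<beta> ?\<alpha>" "?\<alpha> \<noteq> \<beta>" "?\<alpha> \<noteq> []"
    using pattern_is_perm[OF perm inner] contains_pattern[OF perm inner] by auto
  have "\<beta> \<noteq> []" "length \<beta> \<noteq> 1" using ab by auto
  then have one: "is_perm [0]" "contains \<beta> [0]" "[0] \<noteq> \<beta>"
    using is_perm_singleton contains_singleton by auto
  have "set ?\<alpha>s \<subseteq> {?\<alpha>, [0]}" unfolding interval_args_def by auto
  then have "\<forall>\<alpha>\<in>set ?\<alpha>s. is_perm \<alpha> \<and> contains \<beta> \<alpha> \<and> \<alpha> \<noteq> \<beta> \<and> \<alpha> \<noteq> []"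
    using \<alpha> one by auto
  moreover have "length ?\<alpha>s = length ?\<sigma>" unfolding interval_args_def using ab abc(2) by simp
  moreover have "inflate ?\<sigma> ?\<alpha>s = \<beta>" using inflate_skeleton_eq[OF perm ab(1) abc(2) img] .
  ultimately show ?thesis using that \<sigma> by blast
qed

section \<open>The substitution closure\<close>

(* Basis elements of a substitution-closed class are simple: otherwise they would be
   inflations of smaller members of the class. *)
lemma basis_of_subst_closed_is_simple:
  assumes closed: "subst_closed D" and \<beta>: "\<beta> \<in> basis D"
  shows "simple \<beta>"
proof (rule ccontr)
  assume nonsimple: "\<not> simple \<beta>"
  have perm: "is_perm \<beta>" and minimal: "\<And>\<sigma>. is_perm \<sigma> \<Longrightarrow> contains \<beta> \<sigma> \<Longrightarrow> \<sigma> \<noteq> \<beta> \<Longrightarrow> \<sigma> \<in> D"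
    using \<beta> unfolding basis_def by auto
  obtain \<sigma> \<alpha>s where infl: "inflate \<sigma> \<alpha>s = \<beta>" "length \<alpha>s = length \<sigma>"
      and \<sigma>: "is_perm \<sigma>" "contains \<beta> \<sigma>" "\<sigma> \<noteq> \<beta>"
      and \<alpha>s: "\<forall>\<alpha>\<in>set \<alpha>s. is_perm \<alpha> \<and> contains \<beta> \<alpha> \<and> \<alpha> \<noteq> \<beta> \<and> \<alpha> \<noteq> []"
    using nonsimple_is_proper_inflation[OF perm nonsimple] by blast
  have "inflate \<sigma> \<alpha>s \<in> D"
    using closed minimal[OF \<sigma>] \<alpha>s minimal infl(2) unfolding subst_closed_def by blast
  then show False using infl(1) \<beta> unfolding basis_def by simp
qed

definition closure_family :: "nat list set \<Rightarrow> nat list set set" where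
  "closure_family C = {D. perm_class D \<and> subst_closed D \<and> C \<subseteq> D}"

lemma subst_closure_eq: "subst_closure C = \<Inter>(closure_family C)"
  unfolding subst_closure_def closure_family_def ..

lemma subst_closure_subst_closed: "subst_closed (subst_closure C)"
  unfolding subst_closed_def
proof (intro ballI allI impI)
  fix \<sigma> \<alpha>s assume \<sigma>: "\<sigma> \<in> subst_closure C"
    and \<alpha>s: "length \<alpha>s = length \<sigma> \<and> (\<forall>\<alpha>\<in>set \<alpha>s. \<alpha> \<in> subst_closure C \<and> \<alpha> \<noteq> [])"
  show "inflate \<sigma> \<alpha>s \<in> subst_closure C"
    unfolding subst_closure_eq
  proof
    fix D assume "D \<in> closure_family C"
    then have "subst_closed D" "\<sigma> \<in> D" "\<forall>\<alpha>\<in>set \<alpha>s. \<alpha> \<in> D \<and> \<alpha> \<noteq> []"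
      using \<sigma> \<alpha>s unfolding subst_closure_eq closure_family_def by auto
    then show "inflate \<sigma> \<alpha>s \<in> D" using \<alpha>s unfolding subst_closed_def by blast
  qed
qed

(* The members of E all of whose simple patterns lie in C.  If E belongs to the
   family, so does this restriction, by simple_pattern_of_inflation. *)
definition simple_restriction :: "nat list set \<Rightarrow> nat list set \<Rightarrow> nat list set" where
  "simple_restriction C E = {\<pi>\<in>E. \<forall>\<tau>. is_perm \<tau> \<and> contains \<pi> \<tau> \<and> simple \<tau> \<longrightarrow> \<tau> \<in> C}"

lemma simple_restriction_in_family:
  assumes C: "perm_class C" and E: "E \<in> closure_family C"
  shows "simple_restriction C E \<in> closure_family C"
proof -
  have E: "perm_class E" "subst_closed E" "C \<subseteq> E" using E unfolding closure_family_def by auto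
  have E_perm: "is_perm \<pi>" if "\<pi> \<in> E" for \<pi> using E(1) that unfolding perm_class_def by blast
  have "perm_class (simple_restriction C E)"
    unfolding perm_class_def
  proof (intro conjI ballI allI impI)
    fix \<pi> assume "\<pi> \<in> simple_restriction C E"
    then show "is_perm \<pi>" using E_perm unfolding simple_restriction_def by blast
  next
    fix \<pi> \<sigma> assume \<pi>: "\<pi> \<in> simple_restriction C E" and \<sigma>: "is_perm \<sigma> \<and> contains \<pi> \<sigma>"
    then have "\<sigma> \<in> E" using E(1) unfolding simple_restriction_def perm_class_def by blast
    moreover have "\<forall>\<tau>. is_perm \<tau> \<and> contains \<sigma> \<tau> \<and> simple \<tau> \<longrightarrow> \<tau> \<in> C"
      using \<pi> \<sigma> contains_trans unfolding simple_restriction_def by blast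
    ultimately show "\<sigma> \<in> simple_restriction C E" unfolding simple_restriction_def by blast
  qed
  moreover have "subst_closed (simple_restriction C E)"
    unfolding subst_closed_def
  proof (intro ballI allI impI)
    fix \<sigma> \<alpha>s assume \<sigma>: "\<sigma> \<in> simple_restriction C E"
      and \<alpha>s: "length \<alpha>s = length \<sigma> \<and> (\<forall>\<alpha>\<in>set \<alpha>s. \<alpha> \<in> simple_restriction C E \<and> \<alpha> \<noteq> [])"
    have inE: "\<sigma> \<in> E" "\<forall>\<alpha>\<in>set \<alpha>s. \<alpha> \<in> E \<and> \<alpha> \<noteq> []"
      using \<sigma> \<alpha>s unfolding simple_restriction_def by auto
    then have perms: "is_perm \<sigma>" "\<forall>\<alpha>\<in>set \<alpha>s. is_perm \<alpha>" using E_perm by auto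
    have "inflate \<sigma> \<alpha>s \<in> E" using E(2) inE \<alpha>s unfolding subst_closed_def by blast
    moreover have "\<tau> \<in> C" if \<tau>: "is_perm \<tau>" "contains (inflate \<sigma> \<alpha>s) \<tau>" "simple \<tau>" for \<tau>
    proof -
      have "contains \<sigma> \<tau> \<or> (\<exists>\<alpha>\<in>set \<alpha>s. contains \<alpha> \<tau>)"
        using simple_pattern_of_inflation[OF perms(1) _ perms(2) \<tau>(1,3,2)] \<alpha>s by blast
      then show ?thesis using \<sigma> \<alpha>s \<tau> unfolding simple_restriction_def by blast
    qed
    ultimately show "inflate \<sigma> \<alpha>s \<in> simple_restriction C E" unfolding simple_restriction_def by blast
  qed
  moreover have "C \<subseteq> simple_restriction C E"
    using C E(3) unfolding perm_class_def simple_restriction_def by blast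
  ultimately show ?thesis unfolding closure_family_def by blast
qed

(* Simple permutations of the substitution closure already lie in C (whenever the
   closure is a proper class, i.e. the family is nonempty). *)
lemma simple_in_subst_closure:
  assumes C: "perm_class C" and proper: "subst_closure C \<noteq> UNIV"
    and \<pi>: "\<pi> \<in> subst_closure C" "simple \<pi>"
  shows "\<pi> \<in> C"
proof -
  obtain E where E: "E \<in> closure_family C" using proper unfolding subst_closure_eq by auto
  have "\<pi> \<in> simple_restriction C E"
    using \<pi>(1) simple_restriction_in_family[OF C E] unfolding subst_closure_eq by blast
  moreover have "is_perm \<pi>"
    using calculation E unfolding simple_restriction_def closure_family_def perm_class_def by blast
  ultimately show ?thesis using \<pi>(2) contains_refl unfolding simple_restriction_def by blast
qed

theorem mainTheorem7:
  fixes C :: "nat list set" and k :: nat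
  assumes "perm_class C"
    and "finite {\<sigma>\<in>C. simple \<sigma>}"
    and "\<exists>\<sigma>\<in>C. simple \<sigma> \<and> length \<sigma> = k"
    and "\<forall>\<sigma>\<in>C. simple \<sigma> \<longrightarrow> length \<sigma> \<le> k"
  shows "\<forall>\<beta>\<in>basis (subst_closure C). length \<beta> \<le> k + 2"
proof
  fix \<beta> assume \<beta>: "\<beta> \<in> basis (subst_closure C)"
  then have perm: "is_perm \<beta>" and proper: "subst_closure C \<noteq> UNIV"
    and minimal: "\<And>\<sigma>. is_perm \<sigma> \<Longrightarrow> contains \<beta> \<sigma> \<Longrightarrow> \<sigma> \<noteq> \<beta> \<Longrightarrow> \<sigma> \<in> subst_closure C"
    unfolding basis_def by auto
  have simple: "simple \<beta>" using basis_of_subst_closed_is_simple[OF subst_closure_subst_closed \<beta>] .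
  show "length \<beta> \<le> k + 2"
  proof (rule ccontr)
    assume long: "\<not> length \<beta> \<le> k + 2"
    then have "length \<beta> \<ge> 3" by simp
    then obtain \<tau> where \<tau>: "is_perm \<tau>" "contains \<beta> \<tau>" "simple \<tau>"
      "length \<tau> < length \<beta>" "length \<beta> \<le> length \<tau> + 2"
      using simple_perm_large_simple_pattern[OF perm simple] by blast
    have "\<tau> \<in> C" using simple_in_subst_closure[OF assms(1) proper minimal] \<tau> by blast
    then have "length \<tau> \<le> k" using assms(4) \<tau>(3) by blast
    then show False using \<tau>(5) long by simp
  qed
qed

end
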